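(* Let $A$ be an alphabet and let $K$ be one of $K_1$, $K_2$, $K_3$. The quantitative language-inclusion problem for weighted Büchi automata over $K$ and $A$ is decidable: there is an algorithm that, given weighted Büchi automata $\mathcal{N},\widehat{\mathcal{N}}$ over $K$ and $A$, decides whether $(\|\mathcal{N}\|,w)\le(\|\widehat{\mathcal{N}}\|,w)$ for all $w\in A^{\omega}$.
   Context: $\overline{\mathbb{Q}}=\mathbb{Q}\cup\{\infty,-\infty\}$ with its usual order. In each of $K_1,K_2,K_3$ the carrier is $\overline{\mathbb{Q}}$, addition (binary and infinitary) is $\sup$ with zero $-\infty$, product is $\inf$ with unit $\infty$; the $\omega$-valuation functions on sequences $(d_i)_{i\ge0}$ with finitely many values are: for $K_1$, $\mathrm{liminf}$: $-\infty$ if some $d_i=-\infty$; $\infty$ if all $d_i=\infty$; $\sup_{i\ge0}\inf\{d_k\mid k\ge i,d_k\ne\infty\}$ if no $-\infty$ and infinitely many $d_i\ne\infty$; $\inf\{d_i\mid d_i\ne\infty\}$ otherwise. For $K_2$, $\mathrm{limsup}$: $-\infty$ if some $d_i=-\infty$; $\infty$ if all $d_i=\infty$; $\inf_{i\ge0}\sup\{d_k\mid k\ge i,d_k\ne\infty\}$ if no $-\infty$ and infinitely many $d_i\ne\infty$; $\sup\{d_i\mid d_i\ne\infty\}$ otherwise. For $K_3$, $\sup_{-\infty}$: $-\infty$ if some $d_i=-\infty$; $\infty$ if all $d_i=\infty$; $\sup\{d_k\mid d_k\ne\infty\}$ otherwise. A weighted Büchi automaton over $A$ and $K$ is $(Q,wt,I,F)$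 with finite $Q$, $wt:Q\times A\times Q\to\overline{\mathbb{Q}}$, $I,F\subseteq Q$; the weight of a path $(q_j,a_j,q_{j+1})_{j\ge0}$ is the $\omega$-valuation of $(wt(q_j,a_j,q_{j+1}))_j$; a path is successful if $q_0\in I$ and some state of $F$ occurs infinitely often; the behavior $(\|\mathcal{A}\|,w)$ is the supremum of the weights of successful paths over $w$ ($-\infty$ if none). *)

theory Defs
  imports Complex_Main "HOL-Library.Extended_Real" "HOL-Library.Nat_Bijection"
begin

datatype qbar = MInf | Fin rat | PInf

text \<open>Order-embedding of the extended rationals into the extended reals; all
  semiring operations (sup, inf) and valuations are order-theoretic and applied to
  finitely many values, so they may be computed in ereal.\<close>
fun to_ereal :: "qbar \<Rightarrow> ereal" where
  "to_ereal MInf = - \<infinity>"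
| "to_ereal (Fin r) = ereal (of_rat r)"
| "to_ereal PInf = \<infinity>"

definition liminf_val :: "(nat \<Rightarrow> ereal) \<Rightarrow> ereal" where
  "liminf_val d =
     (if \<exists>i. d i = - \<infinity> then - \<infinity>
      else if \<forall>i. d i = \<infinity> then \<infinity>
      else if infinite {i. d i \<noteq> \<infinity>}
        then (SUP i. INF k \<in> {k. k \<ge> i \<and> d k \<noteq> \<infinity>}. d k)
      else (INF i \<in> {i. d i \<noteq> \<infinity>}. d i))"

definition limsup_val :: "(nat \<Rightarrow> ereal) \<Rightarrow> ereal" where
  "limsup_val d =
     (if \<exists>i. d i = - \<infinity> then - \<infinity>
      else if \<forall>i. d i = \<infinity> then \<infinity>
      else if infinite {i. d i \<noteq> \<infinity>}
        then (INF i. SUP k \<in> {k. k \<ge> i \<and> d k \<noteq> \<infinity>}. d k)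
      else (SUP i \<in> {i. d i \<noteq> \<infinity>}. d i))"

definition supminf_val :: "(nat \<Rightarrow> ereal) \<Rightarrow> ereal" where
  "supminf_val d =
     (if \<exists>i. d i = - \<infinity> then - \<infinity>
      else if \<forall>i. d i = \<infinity> then \<infinity>
      else (SUP k \<in> {k. d k \<noteq> \<infinity>}. d k))"

datatype valuation_kind = K1 | K2 | K3

fun omega_val :: "valuation_kind \<Rightarrow> (nat \<Rightarrow> ereal) \<Rightarrow> ereal" where
  "omega_val K1 d = liminf_val d"
| "omega_val K2 d = limsup_val d"
| "omega_val K3 d = supminf_val d"

text \<open>The alphabet is A = {0..<m}; states are {0..<nstates}.
  wt q a p is the weight of transition (q,a,p).\<close>
datatype wba = WBA (nstates: nat) (wt: "nat \<Rightarrow> nat \<Rightarrow> nat \<Rightarrow> qbar")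
                   (init: "nat set") (fin: "nat set")

definition wf_wba :: "wba \<Rightarrow> bool" where
  "wf_wba N \<longleftrightarrow> init N \<subseteq> {..<nstates N} \<and> fin N \<subseteq> {..<nstates N}"

definition successful_run :: "wba \<Rightarrow> (nat \<Rightarrow> nat) \<Rightarrow> bool" where
  "successful_run N \<rho> \<longleftrightarrow> (\<forall>j. \<rho> j < nstates N) \<and> \<rho> 0 \<in> init N
     \<and> (\<exists>q\<in>fin N. \<exists>\<^sub>\<infinity>j. \<rho> j = q)"

definition run_weight :: "valuation_kind \<Rightarrow> wba \<Rightarrow> (nat \<Rightarrow> nat) \<Rightarrow> (nat \<Rightarrow> nat) \<Rightarrow> ereal" where
  "run_weight K N w \<rho> = omega_val K (\<lambda>j. to_ereal (wt N (\<rho> j) (w j) (\<rho> (Suc j))))"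

text \<open>Behaviour: supremum (in the semiring: sup, zero = -infinity) over successful paths.\<close>
definition behavior :: "valuation_kind \<Rightarrow> wba \<Rightarrow> (nat \<Rightarrow> nat) \<Rightarrow> ereal" where
  "behavior K N w = (SUP \<rho> \<in> {\<rho>. successful_run N \<rho>}. run_weight K N w \<rho>)"

datatype recf = Zero | Succ | Proj nat | Comp recf "recf list" | PrimRec recf recf | Mn recf

inductive eval_recf :: "recf \<Rightarrow> nat list \<Rightarrow> nat \<Rightarrow> bool" where
  zero: "eval_recf Zero xs 0"
| succ: "eval_recf Succ (x # xs) (Suc x)"
| proj: "i < length xs \<Longrightarrow> eval_recf (Proj i) xs (xs ! i)"
| comp: "length ys = length fs \<Longrightarrow> (\<forall>i<length fs. eval_recf (fs ! i) xs (ys ! i))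
          \<Longrightarrow> eval_recf g ys r \<Longrightarrow> eval_recf (Comp g fs) xs r"
| pr0: "eval_recf f xs r \<Longrightarrow> eval_recf (PrimRec f g) (0 # xs) r"
| prS: "eval_recf (PrimRec f g) (n # xs) r \<Longrightarrow> eval_recf g (n # r # xs) s
          \<Longrightarrow> eval_recf (PrimRec f g) (Suc n # xs) s"
| mn: "eval_recf f (n # xs) 0 \<Longrightarrow> (\<forall>k<n. \<exists>v. v > 0 \<and> eval_recf f (k # xs) v)
          \<Longrightarrow> eval_recf (Mn f) xs n"

fun enc_qbar :: "qbar \<Rightarrow> nat" where
  "enc_qbar MInf = 0"
| "enc_qbar PInf = 1"
| "enc_qbar (Fin r) = 2 + prod_encode (int_encode (fst (quotient_of r)), int_encode (snd (quotient_of r)))"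

definition enc_wba :: "nat \<Rightarrow> wba \<Rightarrow> nat" where
  "enc_wba m N = list_encode
     [nstates N,
      list_encode [enc_qbar (wt N q a p). q \<leftarrow> [0..<nstates N], a \<leftarrow> [0..<m], p \<leftarrow> [0..<nstates N]],
      list_encode (filter (\<lambda>q. q \<in> init N) [0..<nstates N]),
      list_encode (filter (\<lambda>q. q \<in> fin N) [0..<nstates N])]"

definition enc_pair :: "nat \<Rightarrow> wba \<Rightarrow> wba \<Rightarrow> nat" where
  "enc_pair m N N' = prod_encode (enc_wba m N, enc_wba m N')"

end

(* The behaviour of an automaton takes values among its weights and +-infinity, and all suprema
   involved are attained.  So the inclusion holds iff, for each threshold c > -infinity among the
   values of the first automaton, every word with a successful run of value >= c in the first
   automaton also has one in the second.
   Whether a run reaches c depends only on whether -infinity occurs and on whether finite weights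
   below c and finite weights >= c occur never, finitely often or infinitely often.  A finite
   segment of a run is therefore summarised by four flags, and a finite word by its transition
   profile: which states it connects and with which flags.  By Ramsey's theorem every infinite word
   factorises as u v1 v2 ... with all blocks of the same idempotent profile, so that acceptance at
   threshold c depends only on the profiles of u and v; by pumping, u and v may be taken shorter
   than a bound depending on the numbers of states.  The inclusion thus reduces to a bounded search
   over short lasso words u v^omega, carried out by a mu-recursive function on the codes. *)

theory Submission
  imports Defs "HOL-Library.Ramsey"
begin

section \<open>Computable functions of an environment\<close>

text \<open>Computability is stated for expressions over an environment \<open>e\<close>, of which the first \<open>k\<close>
  entries are read, so that closure properties compose freely.\<close>

definition computable :: "nat \<Rightarrow> ((nat \<Rightarrow> nat) \<Rightarrow> nat) \<Rightarrow> bool" where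
  "computable k g \<longleftrightarrow> (\<exists>f. \<forall>e. eval_recf f (map e [0..<k]) (g e))"

definition decidable :: "nat \<Rightarrow> ((nat \<Rightarrow> nat) \<Rightarrow> bool) \<Rightarrow> bool" where
  "decidable k P \<longleftrightarrow> computable k (\<lambda>e. if P e then 1 else 0)"

lemma computable_cong: "computable k f \<Longrightarrow> (\<And>e. f e = g e) \<Longrightarrow> computable k g"
  by (metis ext)

lemma eval_recf_Proj_upt: "i < k \<Longrightarrow> eval_recf (Proj i) (map e [0..<k]) (e i)"
  using eval_recf.proj[of i "map e [0..<k]"] by simp

lemma computable_proj: "i < k \<Longrightarrow> computable k (\<lambda>e. e i)"
  unfolding computable_def using eval_recf_Proj_upt by blast

lemma computable_comp:
  assumes g: "computable j g" and h: "\<forall>i<j. computable k (h i)"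
  shows "computable k (\<lambda>e. g (\<lambda>i. h i e))"
proof -
  obtain gf where gf: "\<And>e. eval_recf gf (map e [0..<j]) (g e)" using g unfolding computable_def by blast
  have "\<forall>i<j. \<exists>f. \<forall>e. eval_recf f (map e [0..<k]) (h i e)" using h unfolding computable_def by blast
  then obtain F where F: "\<And>i e. i < j \<Longrightarrow> eval_recf (F i) (map e [0..<k]) (h i e)" by metis
  have "eval_recf (Comp gf (map F [0..<j])) (map e [0..<k]) (g (\<lambda>i. h i e))" for e
    by (rule eval_recf.comp[where ys = "map (\<lambda>i. h i e) [0..<j]"]) (auto intro: F gf)
  then show ?thesis unfolding computable_def by blast
qed

lemma computable_comp1: "computable 1 (\<lambda>e. h (e 0)) \<Longrightarrow> computable k a \<Longrightarrow> computable k (\<lambda>e. h (a e))"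
  using computable_comp[of 1 "\<lambda>e. h (e 0)" k "\<lambda>i. a"] by simp

lemma computable_comp2:
  "computable 2 (\<lambda>e. h (e 0) (e 1)) \<Longrightarrow> computable k a \<Longrightarrow> computable k b \<Longrightarrow> computable k (\<lambda>e. h (a e) (b e))"
  using computable_comp[of 2 "\<lambda>e. h (e 0) (e 1)" k "\<lambda>i. if i = 0 then a else b"]
  by (simp add: less_2_cases_iff)

lemma computable_comp_list:
  "computable j g \<Longrightarrow> length fs = j \<Longrightarrow> \<forall>h\<in>set fs. computable k h \<Longrightarrow> computable k (\<lambda>e. g (\<lambda>i. (fs ! i) e))"
  by (rule computable_comp) auto

lemma computable_shift: "computable k g \<Longrightarrow> computable (j + k) (\<lambda>e. g (\<lambda>i. e (j + i)))"
  by (rule computable_comp[of k g "j + k" "\<lambda>i e. e (j + i)", simplified]) (auto intro: computable_proj)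

lemmas computable_shift1 = computable_shift[of _ _ "Suc 0", simplified]
lemmas computable_shift2 = computable_shift[of _ _ "Suc (Suc 0)", simplified]

lemma computable_zero: "computable k (\<lambda>e. 0)"
  unfolding computable_def by (auto intro: eval_recf.zero)

lemma computable_Suc: "computable k f \<Longrightarrow> computable k (\<lambda>e. Suc (f e))"
proof -
  have "computable 1 (\<lambda>e. Suc (e 0))"
    unfolding computable_def by (rule exI[of _ Succ]) (auto intro: eval_recf.succ)
  then show "computable k f \<Longrightarrow> computable k (\<lambda>e. Suc (f e))" by (rule computable_comp1)
qed

lemma computable_const: "computable k (\<lambda>e. c)"
  by (induct c) (auto intro: computable_zero computable_Suc[of k "\<lambda>_. _", simplified])

lemma computable_rec_nat:
  assumes b: "computable k b" and s: "computable (Suc (Suc k)) (\<lambda>e. s (e 0) (e 1) (\<lambda>i. e (Suc (Suc i))))"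
    and n: "computable k n"
  shows "computable k (\<lambda>e. rec_nat (b e) (\<lambda>i r. s i r e) (n e))"
proof -
  obtain bf where bf: "\<And>e. eval_recf bf (map e [0..<k]) (b e)" using b unfolding computable_def by blast
  obtain sf where sf: "\<And>e. eval_recf sf (map e [0..<Suc (Suc k)]) (s (e 0) (e 1) (\<lambda>i. e (Suc (Suc i))))"
    using s unfolding computable_def by blast
  obtain nf where nf: "\<And>e. eval_recf nf (map e [0..<k]) (n e)" using n unfolding computable_def by blast
  have rec: "eval_recf (PrimRec bf sf) (i # map e [0..<k]) (rec_nat (b e) (\<lambda>i r. s i r e) i)" for i e
  proof (induct i)
    case 0
    then show ?case using bf by (auto intro: eval_recf.pr0)
  next
    case (Suc i)
    then show ?case
      using sf[of "case_nat i (case_nat (rec_nat (b e) (\<lambda>i r. s i r e) i) e)"]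
      by (auto intro: eval_recf.prS simp del: upt_Suc simp: map_upt_Suc One_nat_def)
  qed
  have "eval_recf (Comp (PrimRec bf sf) (nf # map Proj [0..<k])) (map e [0..<k])
          (rec_nat (b e) (\<lambda>i r. s i r e) (n e))" for e
    by (rule eval_recf.comp[where ys = "n e # map e [0..<k]"])
       (auto simp: nth_Cons' nf rec eval_recf_Proj_upt)
  then show ?thesis unfolding computable_def by blast
qed

lemma computable_add: "computable k f \<Longrightarrow> computable k g \<Longrightarrow> computable k (\<lambda>e. f e + g e)"
proof -
  assume f: "computable k f" and g: "computable k g"
  have "computable k (\<lambda>e. rec_nat (g e) (\<lambda>i r. Suc r) (f e))"
    by (rule computable_rec_nat[OF g _ f]) (auto intro: computable_Suc computable_proj)
  moreover have "rec_nat (g e) (\<lambda>i r. Suc r) n = n + g e" for n e by (induct n) auto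
  ultimately show ?thesis by simp
qed

lemma computable_mult: "computable k f \<Longrightarrow> computable k g \<Longrightarrow> computable k (\<lambda>e. f e * g e)"
proof -
  assume f: "computable k f" and g: "computable k g"
  have "computable k (\<lambda>e. rec_nat 0 (\<lambda>i r. r + g e) (f e))"
    by (rule computable_rec_nat[OF computable_zero _ f, where s = "\<lambda>i r e. r + g e"])
       (auto intro!: computable_add computable_proj computable_shift2[OF g])
  moreover have "rec_nat 0 (\<lambda>i r. r + g e) n = n * g e" for n e by (induct n) auto
  ultimately show ?thesis by simp
qed

lemma computable_diff: "computable k f \<Longrightarrow> computable k g \<Longrightarrow> computable k (\<lambda>e. f e - g e)"
proof -
  assume f: "computable k f" and g: "computable k g"
  have pred: "computable k (\<lambda>e. rec_nat 0 (\<lambda>i r. i) (h e))" if "computable k h" for k h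
    by (rule computable_rec_nat[OF computable_zero _ that]) (auto intro: computable_proj)
  have "computable k (\<lambda>e. rec_nat (f e) (\<lambda>i r. r - 1) (g e))"
  proof (rule computable_rec_nat[OF f _ g])
    have "computable (Suc (Suc k)) (\<lambda>e. rec_nat 0 (\<lambda>i r. i) (e 1))"
      by (rule pred) (auto intro: computable_proj)
    moreover have "rec_nat 0 (\<lambda>i r. i) n = n - 1" for n by (cases n) auto
    ultimately show "computable (Suc (Suc k)) (\<lambda>e. e 1 - 1)" by simp
  qed
  moreover have "rec_nat (f e) (\<lambda>i r. r - 1) n = f e - n" for n e by (induct n) auto
  ultimately show ?thesis by simp
qed

lemma computable_if_zero:
  "computable k c \<Longrightarrow> computable k f \<Longrightarrow> computable k g \<Longrightarrow> computable k (\<lambda>e. if c e = 0 then f e else g e)"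
proof -
  assume c: "computable k c" and f: "computable k f" and g: "computable k g"
  have "computable k (\<lambda>e. rec_nat (f e) (\<lambda>i r. g e) (c e))"
    by (rule computable_rec_nat[OF f _ c, where s = "\<lambda>i r e. g e"]) (auto intro: computable_shift2[OF g])
  moreover have "rec_nat (f e) (\<lambda>i r. g e) n = (if n = 0 then f e else g e)" for n e by (cases n) auto
  ultimately show ?thesis by simp
qed

lemma computable_If:
  "decidable k P \<Longrightarrow> computable k f \<Longrightarrow> computable k g \<Longrightarrow> computable k (\<lambda>e. if P e then f e else g e)"
  unfolding decidable_def
  by (drule computable_if_zero, assumption+) (rule computable_cong, assumption, auto)

lemma decidable_const: "decidable k (\<lambda>e. b)"
  unfolding decidable_def by (rule computable_const)

lemma decidable_eq: "computable k f \<Longrightarrow> computable k g \<Longrightarrow> decidable k (\<lambda>e. f e = g e)"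
  unfolding decidable_def
  by (rule computable_cong[OF computable_if_zero[of k "\<lambda>e. (f e - g e) + (g e - f e)" "\<lambda>e. 1" "\<lambda>e. 0"]])
     (auto intro: computable_add computable_diff computable_const)

lemma decidable_le: "computable k f \<Longrightarrow> computable k g \<Longrightarrow> decidable k (\<lambda>e. f e \<le> g e)"
  unfolding decidable_def
  by (rule computable_cong[OF computable_if_zero[of k "\<lambda>e. f e - g e" "\<lambda>e. 1" "\<lambda>e. 0"]])
     (auto intro: computable_diff computable_const)

lemma decidable_less: "computable k f \<Longrightarrow> computable k g \<Longrightarrow> decidable k (\<lambda>e. f e < g e)"
  unfolding decidable_def
  by (rule computable_cong[OF computable_if_zero[of k "\<lambda>e. g e - f e" "\<lambda>e. 0" "\<lambda>e. 1"]])
     (auto intro: computable_diff computable_const)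

lemma decidable_not: "decidable k P \<Longrightarrow> decidable k (\<lambda>e. \<not> P e)"
  unfolding decidable_def
  by (rule computable_cong[OF computable_if_zero[of k "\<lambda>e. if P e then 1 else 0" "\<lambda>e. 1" "\<lambda>e. 0"]])
     (auto intro: computable_const)

lemma decidable_bool_op:
  fixes F :: "bool \<Rightarrow> bool \<Rightarrow> bool"
  assumes P: "decidable k P" and Q: "decidable k Q"
  shows "decidable k (\<lambda>e. F (P e) (Q e))"
proof -
  have "computable k (\<lambda>e. if P e then
      (if Q e then (if F True True then 1 else 0) else (if F True False then 1 else 0))
                        else (if Q e then (if F False True then 1 else 0) else
                            (if F False False then 1 else 0)))"
    by (intro computable_If P Q computable_const)
  then show ?thesis unfolding decidable_def by (rule computable_cong) auto
qed

lemmas decidable_conj = decidable_bool_op[where F = "(\<and>)"]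
lemmas decidable_disj = decidable_bool_op[where F = "(\<or>)"]
lemmas decidable_imp = decidable_bool_op[where F = "(\<longrightarrow>)"]
lemmas decidable_iff = decidable_bool_op[where F = "(=)"]

lemma computable_sum:
  assumes f: "computable (Suc k) (\<lambda>e. f (e 0) (\<lambda>i. e (Suc i)))" and b: "computable k b"
  shows "computable k (\<lambda>e. \<Sum>i<b e. f i e)"
proof -
  have "computable (Suc (Suc k)) (\<lambda>e. f (case_nat (\<lambda>e. e 0) (\<lambda>j e. e (Suc (Suc j))) 0 e)
                                         (\<lambda>i. case_nat (\<lambda>e. e 0) (\<lambda>j e. e (Suc (Suc j))) (Suc i) e))"
    by (rule computable_comp[OF f]) (auto intro: computable_proj split: nat.split)
  then have "computable k (\<lambda>e. rec_nat 0 (\<lambda>i r. r + f i e) (b e))"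
    by (intro computable_rec_nat[OF computable_zero _ b, where s = "\<lambda>i r e. r + f i e"] computable_add
        computable_proj) auto
  moreover have "rec_nat 0 (\<lambda>i r. r + f i e) n = (\<Sum>i<n. f i e)" for n e by (induct n) auto
  ultimately show ?thesis by simp
qed

lemma decidable_all_less:
  assumes "decidable (Suc k) (\<lambda>e. P (e 0) (\<lambda>i. e (Suc i)))" and "computable k b"
  shows "decidable k (\<lambda>e. \<forall>i<b e. P i e)"
proof -
  have "computable k (\<lambda>e. \<Sum>i<b e. if P i e then 0 else 1)"
    by (intro computable_sum computable_If assms computable_const)
  then have "decidable k (\<lambda>e. (\<Sum>i<b e. if P i e then 0 else 1::nat) = 0)"
    by (intro decidable_eq computable_const)
  then show ?thesis unfolding decidable_def by (rule computable_cong) auto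
qed

lemma decidable_ex_less:
  assumes "decidable (Suc k) (\<lambda>e. P (e 0) (\<lambda>i. e (Suc i)))" and "computable k b"
  shows "decidable k (\<lambda>e. \<exists>i<b e. P i e)"
proof -
  have "decidable k (\<lambda>e. \<not> (\<forall>i<b e. \<not> P i e))"
    by (intro decidable_not decidable_all_less assms)
  then show ?thesis unfolding decidable_def by (rule computable_cong) auto
qed

lemma computable_power: "computable k f \<Longrightarrow> computable k g \<Longrightarrow> computable k (\<lambda>e. f e ^ g e)"
proof -
  assume f: "computable k f" and g: "computable k g"
  have "computable k (\<lambda>e. rec_nat 1 (\<lambda>i r. r * f e) (g e))"
    by (rule computable_rec_nat[OF computable_const _ g, where s = "\<lambda>i r e. r * f e"])
       (auto intro!: computable_mult computable_proj computable_shift2[OF f])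
  moreover have "rec_nat 1 (\<lambda>i r. r * f e) n = f e ^ n" for n e by (induct n) auto
  ultimately show ?thesis by simp
qed

lemma div_eq_card_multiples: "(x::nat) div y = (if y = 0 then 0 else \<Sum>q<x. if Suc q * y \<le> x then 1 else 0)"
proof (cases "y = 0")
  case False
  have "(\<Sum>q<x. if Suc q * y \<le> x then 1 else 0::nat) = card {q. q < x \<and> Suc q * y \<le> x}"
    by (simp add: sum.If_cases Int_def)
  also have "{q. q < x \<and> Suc q * y \<le> x} = {q. q < x div y}"
  proof (rule Collect_cong)
    fix q
    have "Suc q * y \<le> x \<longleftrightarrow> q < x div y"
      using False less_eq_div_iff_mult_less_eq[of y "Suc q" x] by (simp only: Suc_le_eq)
    moreover have "x div y \<le> x" by simp
    ultimately show "q < x \<and> Suc q * y \<le> x \<longleftrightarrow> q < x div y" by linarith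
  qed
  finally show ?thesis using False by simp
qed simp

lemma computable_div:
  assumes f: "computable k f" and g: "computable k g"
  shows "computable k (\<lambda>e. f e div g e)"
proof -
  have "computable (Suc k) (\<lambda>e. if Suc (e 0) * g (\<lambda>i. e (Suc i)) \<le> f (\<lambda>i. e (Suc i)) then 1 else 0)"
    by (intro computable_If decidable_le computable_mult computable_Suc computable_proj computable_const
        computable_shift1[OF f] computable_shift1[OF g]) simp
  then show ?thesis
    unfolding div_eq_card_multiples by (intro computable_if_zero computable_const computable_sum f g)
qed

lemma computable_mod: "computable k f \<Longrightarrow> computable k g \<Longrightarrow> computable k (\<lambda>e. f e mod g e)"
  unfolding minus_div_mult_eq_mod[symmetric] by (intro computable_diff computable_mult computable_div)

lemma computable_funpow:
  assumes h: "computable 1 (\<lambda>e. h (e 0))" and a: "computable k a" and n: "computable k n"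
  shows "computable k (\<lambda>e. (h ^^ n e) (a e))"
proof -
  have "computable k (\<lambda>e. rec_nat (a e) (\<lambda>i r. h r) (n e))"
    by (rule computable_rec_nat[OF a _ n]) (auto intro: computable_comp1[OF h] computable_proj)
  moreover have "rec_nat (a e) (\<lambda>i r. h r) m = (h ^^ m) (a e)" for m e by (induct m) auto
  ultimately show ?thesis by simp
qed

lemma decidable_comp2:
  "decidable 2 (\<lambda>e. P (e 0) (e 1)) \<Longrightarrow> computable k a \<Longrightarrow> computable k b \<Longrightarrow> decidable k (\<lambda>e. P (a e) (b e))"
  unfolding decidable_def by (rule computable_comp2[of "\<lambda>x y. if P x y then 1 else 0"])

lemma decidable_comp_list:
  "decidable j P \<Longrightarrow> length fs = j \<Longrightarrow> \<forall>h\<in>set fs. computable k h \<Longrightarrow> decidable k (\<lambda>e. P (\<lambda>i. (fs ! i) e))"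
  unfolding decidable_def by (rule computable_comp_list)

named_theorems computable_intros
declare computable_proj[computable_intros] computable_const[computable_intros]
  computable_Suc[computable_intros] computable_add[computable_intros] computable_mult[computable_intros]
  computable_diff[computable_intros] computable_power[computable_intros] computable_div[computable_intros]
  computable_mod[computable_intros] computable_If[computable_intros] computable_sum[computable_intros]
  decidable_const[computable_intros] decidable_eq[computable_intros] decidable_le[computable_intros]
  decidable_less[computable_intros] decidable_not[computable_intros] decidable_conj[computable_intros]
  decidable_disj[computable_intros] decidable_imp[computable_intros] decidable_iff[computable_intros]
  decidable_all_less[computable_intros] decidable_ex_less[computable_intros]

lemma computable_triangle: "computable k a \<Longrightarrow> computable k (\<lambda>e. triangle (a e))"
  unfolding triangle_def by (intro computable_intros; simp)

text \<open>Bounded sums computing the components of \<^const>\<open>prod_decode\<close>, which makes them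
  computable.\<close>

definition fst_decode :: "nat \<Rightarrow> nat" where
  "fst_decode x = (\<Sum>a<Suc x. \<Sum>b<Suc x. if triangle (a + b) + a = x then a else 0)"

definition snd_decode :: "nat \<Rightarrow> nat" where
  "snd_decode x = (\<Sum>a<Suc x. \<Sum>b<Suc x. if triangle (a + b) + a = x then b else 0)"

lemma computable_fst_decode: "computable k a \<Longrightarrow> computable k (\<lambda>e. fst_decode (a e))"
  by (rule computable_comp1[of fst_decode], unfold fst_decode_def)
     (intro computable_intros computable_triangle; simp)

lemma computable_snd_decode: "computable k a \<Longrightarrow> computable k (\<lambda>e. snd_decode (a e))"
  by (rule computable_comp1[of snd_decode], unfold snd_decode_def)
     (intro computable_intros computable_triangle; simp)

lemma fst_snd_decode_eq: "fst_decode x = fst (prod_decode x)" "snd_decode x = snd (prod_decode x)"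
proof -
  obtain a0 b0 where ab: "prod_decode x = (a0, b0)" by (cases "prod_decode x")
  then have x: "x = prod_encode (a0, b0)" by (metis prod_decode_inverse)
  then have le: "a0 < Suc x" "b0 < Suc x" using le_prod_encode_1 le_prod_encode_2 by (metis le_imp_less_Suc)+
  have "triangle (a + b) + a = x \<longleftrightarrow> a = a0 \<and> b = b0" for a b
  proof -
    have "triangle (a + b) + a = prod_encode (a, b)" by (simp add: prod_encode_def)
    then show ?thesis unfolding x by (simp only: prod_encode_eq prod.inject)
  qed
  moreover have "(\<Sum>a<Suc x. \<Sum>b<Suc x. if a = a0 \<and> b = b0 then f a b else 0) = f a0 b0"
    for f :: "nat \<Rightarrow> nat \<Rightarrow> nat"
  proof -
    have "(\<Sum>a<Suc x. \<Sum>b<Suc x. if a = a0 \<and> b = b0 then f a b else 0)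
        = (\<Sum>a<Suc x. if a = a0 then \<Sum>b<Suc x. if b = b0 then f a b else 0 else 0)"
      by (rule sum.cong) auto
    also have "\<dots> = f a0 b0" using le by (simp add: sum.delta del: sum.lessThan_Suc)
    finally show ?thesis .
  qed
  ultimately have "fst_decode x = a0 \<and> snd_decode x = b0"
    unfolding fst_decode_def snd_decode_def by presburger
  then show "fst_decode x = fst (prod_decode x)" "snd_decode x = snd (prod_decode x)" using ab by simp_all
qed

lemma fst_decode_prod_encode [simp]: "fst_decode (prod_encode (a, b)) = a"
  and snd_decode_prod_encode [simp]: "snd_decode (prod_encode (a, b)) = b"
  by (simp_all add: fst_snd_decode_eq)

text \<open>Since \<^term>\<open>list_encode (x # xs) = Suc (prod_encode (x, list_encode xs))\<close>, head and tail
  are read off \<open>c - 1\<close>.\<close>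

definition hd_code :: "nat \<Rightarrow> nat" where "hd_code c = fst_decode (c - 1)"
definition tl_code :: "nat \<Rightarrow> nat" where "tl_code c = snd_decode (c - 1)"
definition nth_code :: "nat \<Rightarrow> nat \<Rightarrow> nat" where "nth_code c i = hd_code ((tl_code ^^ i) c)"
definition mem_code :: "nat \<Rightarrow> nat \<Rightarrow> bool" where
  "mem_code c q \<longleftrightarrow> (\<exists>i<c. (tl_code ^^ i) c \<noteq> 0 \<and> hd_code ((tl_code ^^ i) c) = q)"

lemma computable_hd_code: "computable k a \<Longrightarrow> computable k (\<lambda>e. hd_code (a e))"
  unfolding hd_code_def by (intro computable_intros computable_fst_decode)

lemma computable_tl_code_funpow:
  "computable k a \<Longrightarrow> computable k n \<Longrightarrow> computable k (\<lambda>e. (tl_code ^^ n e) (a e))"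
  by (rule computable_funpow) (unfold tl_code_def, intro computable_intros computable_snd_decode; simp)

lemma computable_nth_code: "computable k a \<Longrightarrow> computable k b \<Longrightarrow> computable k (\<lambda>e. nth_code (a e) (b e))"
  unfolding nth_code_def by (intro computable_hd_code computable_tl_code_funpow)

lemma decidable_mem_code: "computable k a \<Longrightarrow> computable k b \<Longrightarrow> decidable k (\<lambda>e. mem_code (a e) (b e))"
  by (rule decidable_comp2[of mem_code], unfold mem_code_def)
     (intro computable_intros computable_hd_code computable_tl_code_funpow; simp)

lemma tl_code_list_encode: "tl_code (list_encode xs) = list_encode (tl xs)"
proof (cases xs)
  case Nil
  have "snd_decode 0 = 0" using snd_decode_prod_encode[of 0 0] by (simp add: prod_encode_def)
  then show ?thesis using Nil by (simp add: tl_code_def)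
qed (simp add: tl_code_def)

lemma tl_code_funpow_list_encode: "(tl_code ^^ i) (list_encode xs) = list_encode (drop i xs)"
  by (induct i) (auto simp: tl_code_list_encode drop_Suc tl_drop)

lemma nth_code_list_encode: "i < length xs \<Longrightarrow> nth_code (list_encode xs) i = xs ! i"
  by (simp add: nth_code_def tl_code_funpow_list_encode Cons_nth_drop_Suc[symmetric] hd_code_def)

lemma length_le_list_encode: "length xs \<le> list_encode xs"
proof (induct xs)
  case (Cons x xs)
  then show ?case using le_prod_encode_2[of "list_encode xs" x] by simp
qed simp

lemma mem_code_list_encode: "mem_code (list_encode xs) q \<longleftrightarrow> q \<in> set xs"
proof -
  have "list_encode (drop i xs) \<noteq> 0 \<and> hd_code (list_encode (drop i xs)) = q \<longleftrightarrow> i < length xs \<and> xs ! i = q"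
    for i
    by (cases "i < length xs") (auto simp: Cons_nth_drop_Suc[symmetric] hd_code_def)
  then have "mem_code (list_encode xs) q \<longleftrightarrow> (\<exists>i<list_encode xs. i < length xs \<and> xs ! i = q)"
    unfolding mem_code_def tl_code_funpow_list_encode by presburger
  also have "\<dots> \<longleftrightarrow> (\<exists>i<length xs. xs ! i = q)"
    using length_le_list_encode[of xs] order_less_le_trans by blast
  finally show ?thesis by (simp add: in_set_conv_nth)
qed


section \<open>Flags and transition profiles of finite segments\<close>

text \<open>Transitions of weight \<infinity> are neutral: the
  valuations ignore them unless all weights are \<infinity>.\<close>

datatype seg_flags = SegFlags (final_seen: bool) (minf_seen: bool) (low_seen: bool) (high_seen: bool)

definition join_flags :: "seg_flags \<Rightarrow> seg_flags \<Rightarrow> seg_flags" where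
  "join_flags a b = SegFlags (final_seen a \<or> final_seen b) (minf_seen a \<or> minf_seen b)
      (low_seen a \<or> low_seen b) (high_seen a \<or> high_seen b)"

lemma seg_flags_UNIV: "(UNIV :: seg_flags set) = (\<lambda>(a, b, c, d). SegFlags a b c d) ` UNIV"
proof -
  have "x \<in> (\<lambda>(a, b, c, d). SegFlags a b c d) ` UNIV" for x
    by (cases x) (auto intro: image_eqI[where x = "(_, _, _, _)"])
  then show ?thesis by auto
qed

lemma finite_seg_flags: "finite (UNIV :: seg_flags set)"
  by (simp add: seg_flags_UNIV)

definition low_weight :: "ereal \<Rightarrow> qbar \<Rightarrow> bool" where
  "low_weight c x \<longleftrightarrow> x \<noteq> MInf \<and> x \<noteq> PInf \<and> to_ereal x < c"

definition high_weight :: "ereal \<Rightarrow> qbar \<Rightarrow> bool" where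
  "high_weight c x \<longleftrightarrow> x \<noteq> MInf \<and> x \<noteq> PInf \<and> c \<le> to_ereal x"

definition flags_of :: "wba \<Rightarrow> ereal \<Rightarrow> (nat \<Rightarrow> nat) \<Rightarrow> (nat \<Rightarrow> nat) \<Rightarrow> nat \<Rightarrow> seg_flags" where
  "flags_of N c x r l = SegFlags (\<exists>k. 0 < k \<and> k \<le> l \<and> r k \<in> fin N)
      (\<exists>k<l. wt N (r k) (x k) (r (Suc k)) = MInf)
      (\<exists>k<l. low_weight c (wt N (r k) (x k) (r (Suc k))))
      (\<exists>k<l. high_weight c (wt N (r k) (x k) (r (Suc k))))"

definition profile :: "wba \<Rightarrow> ereal \<Rightarrow> (nat \<Rightarrow> nat) \<Rightarrow> nat \<Rightarrow> nat \<Rightarrow> nat \<Rightarrow> seg_flags \<Rightarrow> bool" where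
  "profile N c x l p q ch \<longleftrightarrow> (\<exists>r. (\<forall>k\<le>l. r k < nstates N) \<and> r 0 = p \<and> r l = q \<and> flags_of N c x r l = ch)"

definition profile_comp :: "(nat \<Rightarrow> nat \<Rightarrow> seg_flags \<Rightarrow> bool) \<Rightarrow> (nat \<Rightarrow> nat \<Rightarrow> seg_flags \<Rightarrow> bool) \<Rightarrow> nat \<Rightarrow> nat
    \<Rightarrow> seg_flags \<Rightarrow> bool" where
  "profile_comp P1 P2 = (\<lambda>p q ch. \<exists>q' a b. P1 p q' a \<and> P2 q' q b \<and> ch = join_flags a b)"

lemma ex_less_add_iff: "(\<exists>k<(l1::nat) + l2. P k) \<longleftrightarrow> (\<exists>k<l1. P k) \<or> (\<exists>k<l2. P (l1 + k))"
proof
  assume "\<exists>k<l1 + l2. P k"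
  then obtain k where "k < l1 + l2" "P k" by blast
  show "(\<exists>k<l1. P k) \<or> (\<exists>k<l2. P (l1 + k))"
  proof (cases "k < l1")
    case True then show ?thesis using \<open>P k\<close> by blast
  next
    case False
    then have "k - l1 < l2" "l1 + (k - l1) = k" using \<open>k < l1 + l2\<close> by linarith+
    then show ?thesis using \<open>P k\<close> by metis
  qed
next
  assume "(\<exists>k<l1. P k) \<or> (\<exists>k<l2. P (l1 + k))"
  then show "\<exists>k<l1 + l2. P k"
  proof (elim disjE exE conjE)
    fix k assume "k < l1" "P k" then show ?thesis by (intro exI[of _ k]) simp
  next
    fix k assume "k < l2" "P (l1 + k)" then show ?thesis by (intro exI[of _ "l1 + k"]) simp
  qed
qed

lemma ex_less_Suc_shift: "(\<exists>k<l. P (Suc k)) \<longleftrightarrow> (\<exists>k. 0 < k \<and> k \<le> l \<and> P k)"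
proof
  assume "\<exists>k<l. P (Suc k)" then show "\<exists>k. 0 < k \<and> k \<le> l \<and> P k" by (metis Suc_leI zero_less_Suc)
next
  assume "\<exists>k. 0 < k \<and> k \<le> l \<and> P k"
  then obtain k where "0 < k" "k \<le> l" "P k" by blast
  then have "k - 1 < l" "P (Suc (k - 1))" by auto
  then show "\<exists>k<l. P (Suc k)" by blast
qed

lemma ex_le_add_iff:
  "(\<exists>k. 0 < k \<and> k \<le> (l1::nat) + l2 \<and> P k) \<longleftrightarrow> (\<exists>k. 0 < k \<and> k \<le> l1 \<and> P k) \<or> (\<exists>k. 0 < k \<and> k \<le> l2 \<and> P (l1 + k))"
  by (simp only: ex_less_Suc_shift[symmetric] ex_less_add_iff add_Suc_right)

lemma flags_of_append:
  "flags_of N c x r (l1 + l2)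
      = join_flags (flags_of N c x r l1) (flags_of N c (\<lambda>k. x (l1 + k)) (\<lambda>k. r (l1 + k)) l2)"
  unfolding flags_of_def join_flags_def
  by (simp only: ex_less_add_iff ex_le_add_iff seg_flags.sel add_Suc_right)

lemma flags_of_cong:
  assumes "\<forall>k\<le>l. r k = r' k" "\<forall>k<l. x k = x' k"
  shows "flags_of N c x r l = flags_of N c x' r' l"
proof -
  have r: "k \<le> l \<Longrightarrow> r k = r' k" and x: "k < l \<Longrightarrow> x k = x' k" for k using assms by auto
  show ?thesis unfolding flags_of_def by (simp add: r x cong: conj_cong)
qed

lemma profile_cong: "\<forall>k<l. x k = y k \<Longrightarrow> profile N c x l = profile N c y l"
proof -
  assume "\<forall>k<l. x k = y k"
  then have "flags_of N c x r l = flags_of N c y r l" for r by (intro flags_of_cong) auto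
  then show ?thesis unfolding profile_def by simp
qed

lemma profile_append: "profile N c x (l1 + l2)
    = profile_comp (profile N c x l1) (profile N c (\<lambda>k. x (l1 + k)) l2)"
proof (intro ext iffI)
  fix p q ch
  assume "profile N c x (l1 + l2) p q ch"
  then obtain r where r: "\<forall>k\<le>l1 + l2. r k < nstates N" "r 0 = p" "r (l1 + l2) = q"
    "flags_of N c x r (l1 + l2) = ch" unfolding profile_def by blast
  have "profile N c x l1 p (r l1) (flags_of N c x r l1)"
    unfolding profile_def using r by (intro exI[of _ r]) auto
  moreover have "profile N c (\<lambda>k. x (l1 + k)) l2 (r l1) q (flags_of N c (\<lambda>k. x (l1 + k)) (\<lambda>k. r (l1 + k)) l2)"
    unfolding profile_def using r by (intro exI[of _ "\<lambda>k. r (l1 + k)"]) auto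
  ultimately show "profile_comp (profile N c x l1) (profile N c (\<lambda>k. x (l1 + k)) l2) p q ch"
    unfolding profile_comp_def using r(4) flags_of_append[of N c x r l1 l2] by blast
next
  fix p q ch
  assume "profile_comp (profile N c x l1) (profile N c (\<lambda>k. x (l1 + k)) l2) p q ch"
  then obtain q' a b r1 r2 where
    r1: "\<forall>k\<le>l1. r1 k < nstates N" "r1 0 = p" "r1 l1 = q'" "flags_of N c x r1 l1 = a" and
    r2: "\<forall>k\<le>l2. r2 k < nstates N" "r2 0 = q'" "r2 l2 = q" "flags_of N c (\<lambda>k. x (l1 + k)) r2 l2 = b" and
    ch: "ch = join_flags a b"
    unfolding profile_comp_def profile_def by blast
  define r where "r = (\<lambda>k. if k \<le> l1 then r1 k else r2 (k - l1))"
  have "flags_of N c x r l1 = a" using r1(4) by (subst flags_of_cong[of _ r r1]) (auto simp: r_def)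
  moreover have "flags_of N c (\<lambda>k. x (l1 + k)) (\<lambda>k. r (l1 + k)) l2 = b"
    using r2(4) r1(3) r2(2) by (subst flags_of_cong[of _ _ r2]) (auto simp: r_def)
  moreover have "\<forall>k\<le>l1 + l2. r k < nstates N" using r1 r2 by (auto simp: r_def)
  moreover have "r 0 = p" "r (l1 + l2) = q" using r1 r2 by (auto simp: r_def)
  ultimately show "profile N c x (l1 + l2) p q ch"
    unfolding profile_def using ch flags_of_append[of N c x r l1 l2] by metis
qed


section \<open>Threshold characterisation of the valuations\<close>

fun meets_threshold :: "valuation_kind \<Rightarrow> ereal \<Rightarrow> (nat \<Rightarrow> qbar) \<Rightarrow> bool" where
  "meets_threshold K1 c d \<longleftrightarrow> (\<forall>j. d j \<noteq> MInf) \<and> finite {j. low_weight c (d j)}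
      \<and> (infinite {j. high_weight c (d j)} \<or> {j. low_weight c (d j)} = {})"
| "meets_threshold K2 c d \<longleftrightarrow> (\<forall>j. d j \<noteq> MInf)
    \<and> (infinite {j. high_weight c (d j)}
        \<or> (finite {j. low_weight c (d j)} \<and> ({j. high_weight c (d j)} \<noteq> {} \<or> {j. low_weight c (d j)} = {})))"
| "meets_threshold K3 c d \<longleftrightarrow> (\<forall>j. d j \<noteq> MInf) \<and> ({j. high_weight c (d j)} \<noteq> {} \<or> {j. low_weight c (d j)} = {})"

lemma to_ereal_MInf_iff [simp]: "to_ereal x = - \<infinity> \<longleftrightarrow> x = MInf"
  by (cases x) auto

lemma to_ereal_PInf_iff [simp]: "to_ereal x = \<infinity> \<longleftrightarrow> x = PInf"
  by (cases x) auto

lemma SUP_attained: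
  fixes f :: "'a \<Rightarrow> 'b::complete_linorder"
  assumes "finite (f ` A)" "A \<noteq> {}"
  shows "\<exists>a\<in>A. (SUP x\<in>A. f x) = f a"
  using Max_in[OF assms(1)] Max_Sup[OF assms(1)] assms(2) by auto

lemma INF_attained:
  fixes f :: "'a \<Rightarrow> 'b::complete_linorder"
  assumes "finite (f ` A)" "A \<noteq> {}"
  shows "\<exists>a\<in>A. (INF x\<in>A. f x) = f a"
  using Min_in[OF assms(1)] Min_Inf[OF assms(1)] assms(2) by auto

lemma le_SUP_finite_iff:
  fixes f :: "'a \<Rightarrow> ereal"
  assumes "finite (f ` A)" "c \<noteq> - \<infinity>"
  shows "c \<le> (SUP x\<in>A. f x) \<longleftrightarrow> (\<exists>x\<in>A. c \<le> f x)"
proof (cases "A = {}")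
  case True
  then show ?thesis using assms by (simp add: bot_ereal_def)
next
  case False
  then obtain a where "a \<in> A" "(SUP x\<in>A. f x) = f a" using SUP_attained[OF assms(1)] by blast
  then show ?thesis by (metis SUP_upper order_trans)
qed

lemma finite_Collect_nat_iff: "finite {j::nat. P j} \<longleftrightarrow> (\<exists>i. \<forall>k\<ge>i. \<not> P k)"
  using infinite_nat_iff_unbounded_le[of "{j. P j}"] by auto

lemma le_liminf_val_iff:
  fixes D :: "nat \<Rightarrow> ereal"
  assumes fin: "finite (range D)" and c: "c \<noteq> - \<infinity>" and D: "\<forall>j. D j \<noteq> - \<infinity>"
  defines "Lo \<equiv> {j. D j \<noteq> \<infinity> \<and> D j < c}" and "Hi \<equiv> {j. D j \<noteq> \<infinity> \<and> c \<le> D j}"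
  shows "c \<le> liminf_val D \<longleftrightarrow> finite Lo \<and> (infinite Hi \<or> Lo = {})"
proof -
  have LoHi: "{j. D j \<noteq> \<infinity>} = Lo \<union> Hi" unfolding Lo_def Hi_def by auto
  have frD: "finite (D ` A)" for A using fin by (rule finite_subset[rotated]) auto
  consider "\<forall>j. D j = \<infinity>" | "infinite {j. D j \<noteq> \<infinity>}" | "finite {j. D j \<noteq> \<infinity>}" "\<exists>j. D j \<noteq> \<infinity>"
    by blast
  then show ?thesis
  proof cases
    case 1
    then show ?thesis by (simp add: liminf_val_def Lo_def Hi_def)
  next
    case 2
    have ne: "{k. k \<ge> i \<and> D k \<noteq> \<infinity>} \<noteq> {}" for i
      using 2 by (auto simp: infinite_nat_iff_unbounded_le)
    define g where "g i = (INF k \<in> {k. k \<ge> i \<and> D k \<noteq> \<infinity>}. D k)" for i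
    have "finite (range g)"
      unfolding g_def by (rule finite_subset[OF _ fin]) (use INF_attained[OF frD ne] in fastforce)
    moreover have "liminf_val D = (SUP i. g i)" using 2 D by (auto simp: liminf_val_def g_def)
    ultimately have "c \<le> liminf_val D \<longleftrightarrow> (\<exists>i. c \<le> g i)" using le_SUP_finite_iff[of g UNIV c] c by simp
    also have "\<dots> \<longleftrightarrow> (\<exists>i. \<forall>k\<ge>i. \<not> (D k \<noteq> \<infinity> \<and> D k < c))"
      by (auto simp: g_def le_INF_iff not_less)
    also have "\<dots> \<longleftrightarrow> finite Lo" unfolding Lo_def finite_Collect_nat_iff ..
    also have "\<dots> \<longleftrightarrow> finite Lo \<and> (infinite Hi \<or> Lo = {})" using 2 LoHi by auto
    finally show ?thesis .
  next
    case 3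
    have "c \<le> liminf_val D \<longleftrightarrow> Lo = {}"
      using 3 D by (auto simp: liminf_val_def le_INF_iff Lo_def not_less)
    moreover have "finite Lo" "finite Hi" using 3 LoHi by simp_all
    ultimately show ?thesis by auto
  qed
qed

lemma le_limsup_val_iff:
  fixes D :: "nat \<Rightarrow> ereal"
  assumes fin: "finite (range D)" and c: "c \<noteq> - \<infinity>" and D: "\<forall>j. D j \<noteq> - \<infinity>"
  defines "Lo \<equiv> {j. D j \<noteq> \<infinity> \<and> D j < c}" and "Hi \<equiv> {j. D j \<noteq> \<infinity> \<and> c \<le> D j}"
  shows "c \<le> limsup_val D \<longleftrightarrow> infinite Hi \<or> (finite Lo \<and> (Hi \<noteq> {} \<or> Lo = {}))"
proof -
  have LoHi: "{j. D j \<noteq> \<infinity>} = Lo \<union> Hi" unfolding Lo_def Hi_def by auto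
  have frD: "finite (D ` A)" for A using fin by (rule finite_subset[rotated]) auto
  consider "\<forall>j. D j = \<infinity>" | "infinite {j. D j \<noteq> \<infinity>}" | "finite {j. D j \<noteq> \<infinity>}" "\<exists>j. D j \<noteq> \<infinity>"
    by blast
  then show ?thesis
  proof cases
    case 1
    then show ?thesis by (simp add: limsup_val_def Lo_def Hi_def)
  next
    case 2
    have "c \<le> limsup_val D \<longleftrightarrow> (\<forall>i. c \<le> (SUP k \<in> {k. k \<ge> i \<and> D k \<noteq> \<infinity>}. D k))"
      using 2 D by (auto simp: limsup_val_def le_INF_iff)
    also have "\<dots> \<longleftrightarrow> (\<forall>i. \<exists>k\<ge>i. D k \<noteq> \<infinity> \<and> c \<le> D k)"
      using le_SUP_finite_iff[OF frD c] by auto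
    also have "\<dots> \<longleftrightarrow> infinite Hi" unfolding Hi_def infinite_nat_iff_unbounded_le by simp
    also have "\<dots> \<longleftrightarrow> infinite Hi \<or> (finite Lo \<and> (Hi \<noteq> {} \<or> Lo = {}))" using 2 LoHi by auto
    finally show ?thesis .
  next
    case 3
    have "c \<le> limsup_val D \<longleftrightarrow> Hi \<noteq> {}"
      using 3 D le_SUP_finite_iff[OF frD c] by (auto simp: limsup_val_def Hi_def)
    moreover have "finite Lo" "finite Hi" "Lo \<union> Hi \<noteq> {}" using 3 LoHi by auto
    ultimately show ?thesis by auto
  qed
qed

lemma le_supminf_val_iff:
  fixes D :: "nat \<Rightarrow> ereal"
  assumes fin: "finite (range D)" and c: "c \<noteq> - \<infinity>" and D: "\<forall>j. D j \<noteq> - \<infinity>"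
  defines "Lo \<equiv> {j. D j \<noteq> \<infinity> \<and> D j < c}" and "Hi \<equiv> {j. D j \<noteq> \<infinity> \<and> c \<le> D j}"
  shows "c \<le> supminf_val D \<longleftrightarrow> Hi \<noteq> {} \<or> Lo = {}"
proof (cases "\<forall>j. D j = \<infinity>")
  case True
  then show ?thesis by (simp add: supminf_val_def Lo_def)
next
  case False
  have frD: "finite (D ` A)" for A using fin by (rule finite_subset[rotated]) auto
  have "c \<le> supminf_val D \<longleftrightarrow> Hi \<noteq> {}"
    using False D le_SUP_finite_iff[OF frD c] by (auto simp: supminf_val_def Hi_def)
  moreover have "Lo \<union> Hi \<noteq> {}" using False unfolding Lo_def Hi_def
    by (metis (mono_tags) Un_iff empty_iff mem_Collect_eq not_le)
  ultimately show ?thesis by auto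
qed

lemma le_omega_val_iff:
  assumes fr: "finite (range d)" and c: "c \<noteq> - \<infinity>"
  shows "c \<le> omega_val K (\<lambda>j. to_ereal (d j)) \<longleftrightarrow> meets_threshold K c d"
proof (cases "\<exists>i. d i = MInf")
  case True
  then have "omega_val K (\<lambda>j. to_ereal (d j)) = - \<infinity>"
    by (cases K) (auto simp: liminf_val_def limsup_val_def supminf_val_def)
  then show ?thesis using True c by (cases K) auto
next
  case False
  have fin: "finite (range (\<lambda>j. to_ereal (d j)))" using fr by (simp add: image_image[symmetric])
  have "{j. low_weight c (d j)} = {j. to_ereal (d j) \<noteq> \<infinity> \<and> to_ereal (d j) < c}"
    "{j. high_weight c (d j)} = {j. to_ereal (d j) \<noteq> \<infinity> \<and> c \<le> to_ereal (d j)}"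
    using False by (auto simp: low_weight_def high_weight_def)
  then show ?thesis
    using False le_liminf_val_iff[OF fin c] le_limsup_val_iff[OF fin c] le_supminf_val_iff[OF fin c]
    by (cases K) auto
qed


section \<open>Lasso decompositions of runs\<close>

definition run_weights :: "wba \<Rightarrow> (nat \<Rightarrow> nat) \<Rightarrow> (nat \<Rightarrow> nat) \<Rightarrow> nat \<Rightarrow> qbar" where
  "run_weights N w \<rho> = (\<lambda>j. wt N (\<rho> j) (w j) (\<rho> (Suc j)))"

definition threshold_accepts :: "valuation_kind \<Rightarrow> wba \<Rightarrow> ereal \<Rightarrow> (nat \<Rightarrow> nat) \<Rightarrow> bool" where
  "threshold_accepts K N c w \<longleftrightarrow> (\<exists>\<rho>. successful_run N \<rho> \<and> meets_threshold K c (run_weights N w \<rho>))"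

text \<open>The threshold condition for a run made of a prefix with flags \<open>a\<close> followed by infinitely
  many loop segments with flags \<open>b\<close>.\<close>

fun flags_meet_threshold :: "valuation_kind \<Rightarrow> seg_flags \<Rightarrow> seg_flags \<Rightarrow> bool" where
  "flags_meet_threshold K1 a b \<longleftrightarrow> \<not> low_seen b \<and> (high_seen b \<or> \<not> low_seen a)"
| "flags_meet_threshold K2 a b \<longleftrightarrow> high_seen b \<or> (\<not> low_seen b \<and> \<not> high_seen b \<and> (high_seen a \<or> \<not> low_seen a))"
| "flags_meet_threshold K3 a b \<longleftrightarrow> high_seen a \<or> high_seen b \<or> (\<not> low_seen a \<and> \<not> low_seen b)"

text \<open>\<open>S\<close> and \<open>E\<close> stand for the profiles of the prefix and of the loop blocks of a factorised word.\<close>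

definition lasso_accepts :: "valuation_kind \<Rightarrow> wba \<Rightarrow> (nat \<Rightarrow> nat \<Rightarrow> seg_flags \<Rightarrow> bool)
    \<Rightarrow> (nat \<Rightarrow> nat \<Rightarrow> seg_flags \<Rightarrow> bool) \<Rightarrow> bool" where
  "lasso_accepts K N S E \<longleftrightarrow>
      (\<exists>p\<in>init N. \<exists>q a b. S p q a \<and> E q q b \<and> final_seen b \<and> \<not> minf_seen a \<and> \<not> minf_seen b
          \<and> flags_meet_threshold K a b)"

lemma successful_run_iff:
  assumes "wf_wba N"
  shows "successful_run N \<rho> \<longleftrightarrow> (\<forall>j. \<rho> j < nstates N) \<and> \<rho> 0 \<in> init N \<and> infinite {j. \<rho> j \<in> fin N}"
proof -
  have "(\<exists>q\<in>fin N. infinite {j. \<rho> j = q}) \<longleftrightarrow> infinite {j. \<rho> j \<in> fin N}"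
  proof
    assume "\<exists>q\<in>fin N. infinite {j. \<rho> j = q}"
    then obtain q where "q \<in> fin N" "infinite {j. \<rho> j = q}" by blast
    moreover have "{j. \<rho> j = q} \<subseteq> {j. \<rho> j \<in> fin N}" using \<open>q \<in> fin N\<close> by auto
    ultimately show "infinite {j. \<rho> j \<in> fin N}" using infinite_super by blast
  next
    assume inf: "infinite {j. \<rho> j \<in> fin N}"
    have "finite (fin N)" using assms unfolding wf_wba_def by (meson finite_lessThan finite_subset)
    then have "finite (\<rho> ` {j. \<rho> j \<in> fin N})" by (rule finite_subset[rotated]) auto
    then obtain q where q: "q \<in> \<rho> ` {j. \<rho> j \<in> fin N}" "infinite (\<rho> -` {q} \<inter> {j. \<rho> j \<in> fin N})"
      using inf_img_fin_domE'[OF _ inf] by blast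
    have "infinite {j. \<rho> j = q}" by (rule infinite_super[OF _ q(2)]) auto
    then show "\<exists>q\<in>fin N. infinite {j. \<rho> j = q}" using q(1) by blast
  qed
  then show ?thesis unfolding successful_run_def by (simp add: frequently_cofinite)
qed

definition block_of :: "(nat \<Rightarrow> nat) \<Rightarrow> nat \<Rightarrow> nat" where
  "block_of t k = (LEAST i. k < t (Suc i))"

lemma block_of_bounds:
  assumes "strict_mono t" "t 0 = 0"
  shows "t (block_of t k) \<le> k \<and> k < t (Suc (block_of t k))"
proof -
  have ex: "k < t (Suc k)" using seq_suble[OF assms(1), of "Suc k"] by simp
  have 1: "k < t (Suc (block_of t k))" unfolding block_of_def by (rule LeastI[of _ k]) (rule ex)
  have 2: "t (block_of t k) \<le> k"
  proof (cases "block_of t k")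
    case 0 then show ?thesis using assms by simp
  next
    case (Suc j)
    then have "\<not> k < t (Suc j)" using not_less_Least[of j "\<lambda>i. k < t (Suc i)"] unfolding block_of_def by simp
    then show ?thesis using Suc by simp
  qed
  show ?thesis using 1 2 by simp
qed

lemma block_of_eq:
  assumes t: "strict_mono t" "t 0 = 0" and k: "t i \<le> k" "k < t (Suc i)"
  shows "block_of t k = i"
proof -
  have "t (block_of t k) \<le> k" "k < t (Suc (block_of t k))" using block_of_bounds[OF t] by auto
  then have "block_of t k < Suc i" "i < Suc (block_of t k)"
    using k t(1) by (metis le_less_trans not_le strict_mono_less_eq)+
  then show ?thesis by simp
qed

lemma ex_glued_run:
  fixes t :: "nat \<Rightarrow> nat" and r :: "nat \<Rightarrow> nat \<Rightarrow> nat"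
  assumes t: "strict_mono t" "t 0 = 0" and glue: "\<And>i. r i (t (Suc i) - t i) = r (Suc i) 0"
  shows "\<exists>\<rho>. \<forall>i k. k \<le> t (Suc i) - t i \<longrightarrow> \<rho> (t i + k) = r i k"
proof -
  define \<rho> where "\<rho> k = r (block_of t k) (k - t (block_of t k))" for k
  have "\<rho> (t i + k) = r i k" if "k \<le> t (Suc i) - t i" for i k
  proof (cases "k < t (Suc i) - t i")
    case True
    then have "block_of t (t i + k) = i" by (intro block_of_eq[OF t]) auto
    then show ?thesis unfolding \<rho>_def by simp
  next
    case False
    have mono: "t i < t (Suc i)" "t (Suc i) < t (Suc (Suc i))" using t(1) by (simp_all add: strict_mono_less)
    then have "block_of t (t i + k) = Suc i" using False that by (intro block_of_eq[OF t]) auto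
    then show ?thesis unfolding \<rho>_def using False that mono glue[of i] by simp
  qed
  then show ?thesis by blast
qed

lemma ex_cut_bounding:
  fixes A :: "nat set"
  shows "\<exists>n. (finite A \<longrightarrow> A \<subseteq> {..<n}) \<and> (A \<noteq> {} \<longrightarrow> A \<inter> {..<n} \<noteq> {})"
proof (cases "finite A")
  case True
  then show ?thesis using finite_nat_iff_bounded[of A] by auto
next
  case False
  then obtain a where "a \<in> A" by (metis finite.emptyI ex_in_conv)
  then show ?thesis using False by (intro exI[of _ "Suc a"]) auto
qed

lemma ex_less_shift_iff: "(\<exists>k<l. P (u + k)) \<longleftrightarrow> (\<exists>k\<in>{u..<u + l}. P (k::nat))"
proof
  assume "\<exists>k\<in>{u..<u + l}. P k"
  then obtain k where "u \<le> k" "k < u + l" "P k" by auto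
  then show "\<exists>k<l. P (u + k)" by (intro exI[of _ "k - u"]) auto
qed auto

lemma low_seen_flags_of_shift:
  "low_seen (flags_of N c (\<lambda>k. w (u + k)) (\<lambda>k. \<rho> (u + k)) l)
     \<longleftrightarrow> {k. low_weight c (run_weights N w \<rho> k)} \<inter> {u..<u + l} \<noteq> {}"
  using ex_less_shift_iff[of l "\<lambda>k. low_weight c (run_weights N w \<rho> k)" u]
  by (auto simp: flags_of_def run_weights_def)

lemma high_seen_flags_of_shift:
  "high_seen (flags_of N c (\<lambda>k. w (u + k)) (\<lambda>k. \<rho> (u + k)) l)
     \<longleftrightarrow> {k. high_weight c (run_weights N w \<rho> k)} \<inter> {u..<u + l} \<noteq> {}"
  using ex_less_shift_iff[of l "\<lambda>k. high_weight c (run_weights N w \<rho> k)" u]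
  by (auto simp: flags_of_def run_weights_def)

lemma minf_seen_flags_of_shift:
  "minf_seen (flags_of N c (\<lambda>k. w (u + k)) (\<lambda>k. \<rho> (u + k)) l)
     \<longleftrightarrow> (\<exists>k\<in>{u..<u + l}. run_weights N w \<rho> k = MInf)"
  using ex_less_shift_iff[of l "\<lambda>k. run_weights N w \<rho> k = MInf" u]
  by (auto simp: flags_of_def run_weights_def)

lemma final_seen_flags_of_shift:
  "final_seen (flags_of N c (\<lambda>k. w (u + k)) (\<lambda>k. \<rho> (u + k)) l) \<longleftrightarrow> (\<exists>k. 0 < k \<and> k \<le> l \<and> \<rho> (u + k) \<in> fin N)"
  by (simp add: flags_of_def)

lemma flags_meet_threshold_if_meets_threshold:
  fixes d :: "nat \<Rightarrow> qbar" and c :: ereal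
  defines "Lo \<equiv> {k. low_weight c (d k)}" and "Hi \<equiv> {k. high_weight c (d k)}"
  assumes thr: "meets_threshold K c d"
    and a: "low_seen a \<longleftrightarrow> Lo \<inter> {..<n} \<noteq> {}" "high_seen a \<longleftrightarrow> Hi \<inter> {..<n} \<noteq> {}"
    and b: "low_seen b \<longleftrightarrow> Lo \<inter> {n..<m} \<noteq> {}" "high_seen b \<longleftrightarrow> Hi \<inter> {n..<m} \<noteq> {}"
    and late: "finite Lo \<Longrightarrow> Lo \<subseteq> {..<n}" "finite Hi \<Longrightarrow> Hi \<subseteq> {..<n}" "Hi \<noteq> {} \<Longrightarrow> Hi \<inter> {..<n} \<noteq> {}"
    and recurrent: "infinite Hi \<Longrightarrow> Hi \<inter> {n..<m} \<noteq> {}"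
  shows "flags_meet_threshold K a b"
proof -
  have "finite Lo \<Longrightarrow> \<not> low_seen b" "finite Hi \<Longrightarrow> \<not> high_seen b" using b late by auto
  moreover have "Lo = {} \<Longrightarrow> \<not> low_seen a \<and> \<not> low_seen b" using a b by auto
  moreover have "Hi \<noteq> {} \<Longrightarrow> high_seen a" "infinite Hi \<Longrightarrow> high_seen b" using a b late recurrent by auto
  ultimately show ?thesis using thr unfolding Lo_def Hi_def by (cases K) auto
qed

lemma meets_threshold_if_flags_meet_threshold:
  fixes d :: "nat \<Rightarrow> qbar" and c :: ereal and t :: "nat \<Rightarrow> nat"
  defines "Lo \<equiv> {k. low_weight c (d k)}" and "Hi \<equiv> {k. high_weight c (d k)}"
  assumes t: "strict_mono t" "t 0 = 0" and no_MInf: "\<forall>k. d k \<noteq> MInf"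
    and a: "low_seen a \<longleftrightarrow> Lo \<inter> {..<t 1} \<noteq> {}" "high_seen a \<longleftrightarrow> Hi \<inter> {..<t 1} \<noteq> {}"
    and b: "\<And>i. 1 \<le> i \<Longrightarrow> low_seen b \<longleftrightarrow> Lo \<inter> {t i..<t (Suc i)} \<noteq> {}"
      "\<And>i. 1 \<le> i \<Longrightarrow> high_seen b \<longleftrightarrow> Hi \<inter> {t i..<t (Suc i)} \<noteq> {}"
    and cond: "flags_meet_threshold K a b"
  shows "meets_threshold K c d"
proof -
  have split: "k < t 1 \<or> (\<exists>i\<ge>1. k \<in> {t i..<t (Suc i)})" for k
    using block_of_bounds[OF t, of k] by (cases "block_of t k") auto
  have "\<not> low_seen b \<Longrightarrow> finite Lo"
  proof -
    assume "\<not> low_seen b"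
    then have "Lo \<subseteq> {..<t 1}" using split b(1) by blast
    then show "finite Lo" by (rule finite_subset) simp
  qed
  moreover have "\<not> low_seen a \<Longrightarrow> \<not> low_seen b \<Longrightarrow> Lo = {}" using split a(1) b(1) by blast
  moreover have "high_seen b \<Longrightarrow> infinite Hi"
    unfolding infinite_nat_iff_unbounded_le
  proof
    fix M assume "high_seen b"
    then obtain k where "k \<in> Hi" "t (Suc M) \<le> k" using b(2)[of "Suc M"] by auto
    moreover have "M \<le> t (Suc M)" using seq_suble[OF t(1), of "Suc M"] by simp
    ultimately show "\<exists>k\<ge>M. k \<in> Hi" using le_trans by blast
  qed
  moreover have "high_seen a \<or> high_seen b \<Longrightarrow> Hi \<noteq> {}" using a(2) b(2)[of 1] by blast
  ultimately show ?thesis using cond no_MInf unfolding Lo_def Hi_def by (cases K) auto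
qed

lemma meets_threshold_no_MInf: "meets_threshold K c d \<Longrightarrow> d j \<noteq> MInf"
  by (cases K) auto

lemma ex_lasso_cut:
  fixes t \<rho> :: "nat \<Rightarrow> nat" and F Lo Hi :: "nat set"
  assumes t: "strict_mono t" and st: "\<forall>j. \<rho> j < n" and F: "infinite F"
  shows "\<exists>i0 j0. 1 \<le> i0 \<and> i0 < j0 \<and> \<rho> (t i0) = \<rho> (t j0) \<and> F \<inter> {t i0<..t j0} \<noteq> {}
    \<and> (finite Lo \<longrightarrow> Lo \<subseteq> {..<t i0}) \<and> (finite Hi \<longrightarrow> Hi \<subseteq> {..<t i0})
    \<and> (Hi \<noteq> {} \<longrightarrow> Hi \<inter> {..<t i0} \<noteq> {}) \<and> (infinite Hi \<longrightarrow> Hi \<inter> {t i0..<t j0} \<noteq> {})"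
proof -
  obtain q where q: "infinite ((\<lambda>i. \<rho> (t i)) -` {q} \<inter> {1..})"
    by (rule inf_img_fin_domE'[of "\<lambda>i. \<rho> (t i)" "{1..}"])
       (use st infinite_Ici in \<open>auto intro: finite_subset[of _ "{..<n}"]\<close>)
  have recur: "\<exists>i. 1 \<le> i \<and> \<rho> (t i) = q \<and> b \<le> t i" for b
  proof -
    obtain i where "b \<le> i" "i \<in> (\<lambda>i. \<rho> (t i)) -` {q} \<inter> {1..}"
      using q unfolding infinite_nat_iff_unbounded_le by blast
    then show ?thesis using seq_suble[OF t, of i] by auto
  qed
  obtain n1 n2 where n1: "finite Lo \<longrightarrow> Lo \<subseteq> {..<n1}"
    and n2: "finite Hi \<longrightarrow> Hi \<subseteq> {..<n2}" "Hi \<noteq> {} \<longrightarrow> Hi \<inter> {..<n2} \<noteq> {}"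
    using ex_cut_bounding[of Lo] ex_cut_bounding[of Hi] by blast
  obtain i0 where i0: "1 \<le> i0" "\<rho> (t i0) = q" "n1 + n2 \<le> t i0" using recur by blast
  obtain f where f: "t i0 < f" "f \<in> F" using F unfolding infinite_nat_iff_unbounded by blast
  obtain h where h: "infinite Hi \<longrightarrow> t i0 \<le> h \<and> h \<in> Hi"
    using infinite_nat_iff_unbounded_le[of Hi] by blast
  obtain j0 where j0: "\<rho> (t j0) = q" "Suc (f + h) \<le> t j0" using recur by blast
  have "t i0 < t j0" using f j0 by linarith
  then have "i0 < j0" using strict_mono_less[OF t] by blast
  moreover have "F \<inter> {t i0<..t j0} \<noteq> {}" using f j0 by auto
  moreover have "Lo \<subseteq> {..<t i0}" if "finite Lo" using n1 i0 that by fastforce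
  moreover have "Hi \<subseteq> {..<t i0}" if "finite Hi" using n2 i0 that by fastforce
  moreover have "Hi \<inter> {..<t i0} \<noteq> {}" if "Hi \<noteq> {}" using n2 i0 that by fastforce
  moreover have "Hi \<inter> {t i0..<t j0} \<noteq> {}" if "infinite Hi" using h j0 that by fastforce
  ultimately show ?thesis using i0(1,2) j0(1) by (intro exI[of _ i0] exI[of _ j0] conjI impI) simp_all
qed

lemma lasso_accepts_if_threshold_accepts:
  fixes t :: "nat \<Rightarrow> nat"
  assumes wf: "wf_wba N" and t: "strict_mono t" "t 0 = 0"
    and S: "\<forall>j\<ge>1. profile N c w (t j) = S"
    and E: "\<forall>i j. 1 \<le> i \<longrightarrow> i < j \<longrightarrow> profile N c (\<lambda>k. w (t i + k)) (t j - t i) = E"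
    and acc: "threshold_accepts K N c w"
  shows "lasso_accepts K N S E"
proof -
  obtain \<rho> where succ: "successful_run N \<rho>" and thr: "meets_threshold K c (run_weights N w \<rho>)"
    using acc unfolding threshold_accepts_def by blast
  let ?Lo = "{k. low_weight c (run_weights N w \<rho> k)}"
  let ?Hi = "{k. high_weight c (run_weights N w \<rho> k)}"
  have st: "\<forall>j. \<rho> j < nstates N" and ini: "\<rho> 0 \<in> init N" and infF: "infinite {j. \<rho> j \<in> fin N}"
    using succ successful_run_iff[OF wf] by auto
  obtain i0 j0 where ij: "1 \<le> i0" "i0 < j0" "\<rho> (t i0) = \<rho> (t j0)"
    and fin: "{j. \<rho> j \<in> fin N} \<inter> {t i0<..t j0} \<noteq> {}"
    and late: "finite ?Lo \<longrightarrow> ?Lo \<subseteq> {..<t i0}" "finite ?Hi \<longrightarrow> ?Hi \<subseteq> {..<t i0}"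
      "?Hi \<noteq> {} \<longrightarrow> ?Hi \<inter> {..<t i0} \<noteq> {}" "infinite ?Hi \<longrightarrow> ?Hi \<inter> {t i0..<t j0} \<noteq> {}"
    using ex_lasso_cut[OF t(1) st infF, of ?Lo ?Hi] by blast
  have "t i0 < t j0" using ij t(1) by (simp add: strict_mono_less)
  define q where "q = \<rho> (t i0)"
  define a where "a = flags_of N c w \<rho> (t i0)"
  define b where "b = flags_of N c (\<lambda>k. w (t i0 + k)) (\<lambda>k. \<rho> (t i0 + k)) (t j0 - t i0)"
  have "profile N c w (t i0) (\<rho> 0) q a" unfolding profile_def a_def q_def using st by (intro exI[of _ \<rho>]) auto
  then have Sa: "S (\<rho> 0) q a" using S ij by auto
  have "profile N c (\<lambda>k. w (t i0 + k)) (t j0 - t i0) q q b"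
    unfolding profile_def b_def q_def using st ij \<open>t i0 < t j0\<close> by (intro exI[of _ "\<lambda>k. \<rho> (t i0 + k)"]) auto
  then have Eb: "E q q b" using E ij by auto
  have range_a: "{..<t i0} = {0..<0 + t i0}" and range_b: "{t i0..<t j0} = {t i0..<t i0 + (t j0 - t i0)}"
    using \<open>t i0 < t j0\<close> by auto
  have "final_seen b"
  proof -
    obtain f where "\<rho> f \<in> fin N" "t i0 < f" "f \<le> t j0" using fin by auto
    then show ?thesis unfolding b_def final_seen_flags_of_shift by (intro exI[of _ "f - t i0"]) auto
  qed
  moreover have "\<not> minf_seen a" "\<not> minf_seen b"
    using meets_threshold_no_MInf[OF thr] minf_seen_flags_of_shift[of N c w 0 \<rho> "t i0"]
      minf_seen_flags_of_shift[of N c w "t i0" \<rho>] unfolding a_def b_def by simp_all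
  moreover have "flags_meet_threshold K a b"
    using thr unfolding a_def b_def
  proof (rule flags_meet_threshold_if_meets_threshold[where n = "t i0" and m = "t j0"])
    show "low_seen (flags_of N c w \<rho> (t i0)) \<longleftrightarrow> ?Lo \<inter> {..<t i0} \<noteq> {}"
      "high_seen (flags_of N c w \<rho> (t i0)) \<longleftrightarrow> ?Hi \<inter> {..<t i0} \<noteq> {}"
      using low_seen_flags_of_shift[of N c w 0 \<rho>] high_seen_flags_of_shift[of N c w 0 \<rho>]
      unfolding range_a by simp_all
    show "low_seen (flags_of N c (\<lambda>k. w (t i0 + k)) (\<lambda>k. \<rho> (t i0 + k)) (t j0 - t i0))
        \<longleftrightarrow> ?Lo \<inter> {t i0..<t j0} \<noteq> {}"
      "high_seen (flags_of N c (\<lambda>k. w (t i0 + k)) (\<lambda>k. \<rho> (t i0 + k)) (t j0 - t i0))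
          \<longleftrightarrow> ?Hi \<inter> {t i0..<t j0} \<noteq> {}"
      unfolding range_b low_seen_flags_of_shift high_seen_flags_of_shift by (rule refl)+
  qed (use late in auto)
  ultimately show ?thesis using ini Sa Eb unfolding lasso_accepts_def by blast
qed

lemma ex_block_decomposition:
  fixes t :: "nat \<Rightarrow> nat"
  assumes t: "strict_mono t" "t 0 = 0"
  shows "\<exists>i k'. k = t i + k' \<and> k' < t (Suc i) - t i"
  using block_of_bounds[OF t, of k] by (intro exI[of _ "block_of t k"] exI[of _ "k - t (block_of t k)"]) auto

lemma ex_run_with_block_flags:
  fixes t :: "nat \<Rightarrow> nat"
  assumes t: "strict_mono t" "t 0 = 0"
    and first: "profile N c w (t 1) p q a"
    and loop: "\<And>i. 1 \<le> i \<Longrightarrow> profile N c (\<lambda>k. w (t i + k)) (t (Suc i) - t i) q q b"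
  shows "\<exists>\<rho>. \<rho> 0 = p \<and> (\<forall>k. \<rho> k < nstates N) \<and>
    (\<forall>i. flags_of N c (\<lambda>k. w (t i + k)) (\<lambda>k. \<rho> (t i + k)) (t (Suc i) - t i) = (if i = 0 then a else b))"
proof -
  define len where "len i = t (Suc i) - t i" for i
  have "profile N c (\<lambda>k. w (t i + k)) (len i) (if i = 0 then p else q) q (if i = 0 then a else b)" for i
    using first loop[of i] t(2) unfolding len_def by (cases "i = 0") auto
  then obtain R where R: "\<And>i. \<forall>k\<le>len i. R i k < nstates N" "\<And>i. R i 0 = (if i = 0 then p else q)"
    "\<And>i. R i (len i) = q" "\<And>i. flags_of N c (\<lambda>k. w (t i + k)) (R i) (len i) = (if i = 0 then a else b)"
    unfolding profile_def by metis
  obtain \<rho> where \<rho>: "\<And>i k. k \<le> len i \<Longrightarrow> \<rho> (t i + k) = R i k"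
    using ex_glued_run[OF t, of R] R(2,3) unfolding len_def by auto
  have "flags_of N c (\<lambda>k. w (t i + k)) (\<lambda>k. \<rho> (t i + k)) (len i) = (if i = 0 then a else b)" for i
  proof -
    have "flags_of N c (\<lambda>k. w (t i + k)) (\<lambda>k. \<rho> (t i + k)) (len i)
        = flags_of N c (\<lambda>k. w (t i + k)) (R i) (len i)"
      by (rule flags_of_cong) (simp_all add: \<rho>)
    then show ?thesis using R(4) by simp
  qed
  moreover have "\<rho> k < nstates N" for k
    using ex_block_decomposition[OF t, of k] \<rho> R(1) unfolding len_def by (metis less_imp_le)
  moreover have "\<rho> 0 = p" using \<rho>[of 0 0] t(2) R(2)[of 0] by simp
  ultimately show ?thesis unfolding len_def by blast
qed

lemma threshold_accepts_if_lasso_accepts: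
  fixes t :: "nat \<Rightarrow> nat"
  assumes wf: "wf_wba N" and t: "strict_mono t" "t 0 = 0"
    and S: "\<forall>j\<ge>1. profile N c w (t j) = S"
    and E: "\<forall>i j. 1 \<le> i \<longrightarrow> i < j \<longrightarrow> profile N c (\<lambda>k. w (t i + k)) (t j - t i) = E"
    and acc: "lasso_accepts K N S E"
  shows "threshold_accepts K N c w"
proof -
  obtain p q a b where p: "p \<in> init N" and Sa: "S p q a" and Eb: "E q q b" and bF: "final_seen b"
    and aN: "\<not> minf_seen a" and bN: "\<not> minf_seen b" and cond: "flags_meet_threshold K a b"
    using acc unfolding lasso_accepts_def by blast
  obtain \<rho> where \<rho>0: "\<rho> 0 = p" and st: "\<forall>k. \<rho> k < nstates N"
    and blocks: "\<And>i. flags_of N c (\<lambda>k. w (t i + k)) (\<lambda>k. \<rho> (t i + k)) (t (Suc i) - t i)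
        = (if i = 0 then a else b)"
    using ex_run_with_block_flags[OF t, of N c w p q a b] S Sa E Eb by auto
  have span: "t i + (t (Suc i) - t i) = t (Suc i)" for i using t(1)
    by (simp add: strict_mono_less less_imp_le)
  have "infinite {j. \<rho> j \<in> fin N}"
    unfolding infinite_nat_iff_unbounded_le
  proof
    fix M
    obtain k where "\<rho> (t (Suc M) + k) \<in> fin N"
      using blocks[of "Suc M"] bF final_seen_flags_of_shift by fastforce
    moreover have "M \<le> t (Suc M) + k" using seq_suble[OF t(1), of "Suc M"] by simp
    ultimately show "\<exists>j\<ge>M. j \<in> {j. \<rho> j \<in> fin N}" by blast
  qed
  moreover have "meets_threshold K c (run_weights N w \<rho>)"
  proof (rule meets_threshold_if_flags_meet_threshold[OF t _ _ _ _ _ cond])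
    have "run_weights N w \<rho> (t i + k') \<noteq> MInf" if "k' < t (Suc i) - t i" for i k'
      using blocks[of i] minf_seen_flags_of_shift[of N c w "t i" \<rho>] aN bN that by (auto split: if_splits)
    then show "\<forall>k. run_weights N w \<rho> k \<noteq> MInf" using ex_block_decomposition[OF t] by metis
    show "low_seen a \<longleftrightarrow> {k. low_weight c (run_weights N w \<rho> k)} \<inter> {..<t 1} \<noteq> {}"
      "high_seen a \<longleftrightarrow> {k. high_weight c (run_weights N w \<rho> k)} \<inter> {..<t 1} \<noteq> {}"
    proof -
      have "flags_of N c w \<rho> (t 1) = a" using blocks[of 0] t(2) by simp
      then show "low_seen a \<longleftrightarrow> {k. low_weight c (run_weights N w \<rho> k)} \<inter> {..<t 1} \<noteq> {}"
        "high_seen a \<longleftrightarrow> {k. high_weight c (run_weights N w \<rho> k)} \<inter> {..<t 1} \<noteq> {}"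
        using low_seen_flags_of_shift[of N c w 0 \<rho> "t 1"] high_seen_flags_of_shift[of N c w 0 \<rho> "t 1"]
        by (simp_all add: atLeast0LessThan)
    qed
    show "low_seen b \<longleftrightarrow> {k. low_weight c (run_weights N w \<rho> k)} \<inter> {t i..<t (Suc i)} \<noteq> {}"
      "high_seen b \<longleftrightarrow> {k. high_weight c (run_weights N w \<rho> k)} \<inter> {t i..<t (Suc i)} \<noteq> {}"
      if "1 \<le> i" for i
      using blocks[of i] that low_seen_flags_of_shift[of N c w "t i" \<rho> "t (Suc i) - t i"]
        high_seen_flags_of_shift[of N c w "t i" \<rho> "t (Suc i) - t i"] span[of i] by simp_all
  qed
  ultimately show ?thesis unfolding threshold_accepts_def using successful_run_iff[OF wf] st p \<rho>0 by blast
qed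

lemma threshold_accepts_iff_lasso_accepts:
  fixes t :: "nat \<Rightarrow> nat"
  assumes wf: "wf_wba N" and t: "strict_mono t" "t 0 = 0"
    and S: "\<forall>j\<ge>1. profile N c w (t j) = S"
    and E: "\<forall>i j. 1 \<le> i \<longrightarrow> i < j \<longrightarrow> profile N c (\<lambda>k. w (t i + k)) (t j - t i) = E"
  shows "threshold_accepts K N c w \<longleftrightarrow> lasso_accepts K N S E"
  using lasso_accepts_if_threshold_accepts[OF assms] threshold_accepts_if_lasso_accepts[OF assms] by blast


definition concat_word :: "(nat \<Rightarrow> nat) \<Rightarrow> nat \<Rightarrow> (nat \<Rightarrow> nat) \<Rightarrow> nat \<Rightarrow> nat" where
  "concat_word x lx y = (\<lambda>k. if k < lx then x k else y (k - lx))"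

lemma profile_concat_word:
  "profile N c (concat_word x lx y) (lx + ly) = profile_comp (profile N c x lx) (profile N c y ly)"
proof -
  have "profile N c (concat_word x lx y) lx = profile N c x lx"
    by (rule profile_cong) (simp add: concat_word_def)
  moreover have "profile N c (\<lambda>k. concat_word x lx y (lx + k)) ly = profile N c y ly"
    by (rule profile_cong) (simp add: concat_word_def)
  ultimately show ?thesis using profile_append[of N c "concat_word x lx y" lx ly] by simp
qed

definition idempotent_pair :: "wba \<Rightarrow> ereal \<Rightarrow> (nat \<Rightarrow> nat) \<Rightarrow> nat \<Rightarrow> (nat \<Rightarrow> nat) \<Rightarrow> nat \<Rightarrow> bool" where
  "idempotent_pair N c u lu v lv \<longleftrightarrow> profile N c (concat_word u lu v) (lu + lv) = profile N c u lu
     \<and> profile N c (concat_word v lv v) (lv + lv) = profile N c v lv"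

lemma idempotent_pair_iff:
  "idempotent_pair N c u lu v lv \<longleftrightarrow> profile_comp (profile N c u lu) (profile N c v lv) = profile N c u lu
     \<and> profile_comp (profile N c v lv) (profile N c v lv) = profile N c v lv"
  unfolding idempotent_pair_def profile_concat_word ..

lemma profile_periodic_word:
  assumes idem: "profile_comp (profile N c v lv) (profile N c v lv) = profile N c v lv"
    and x: "\<And>k. x k = v (k mod lv)"
  shows "profile N c x (Suc j * lv) = profile N c v lv"
  using x
proof (induct j arbitrary: x)
  case 0
  then show ?case by (simp add: profile_cong)
next
  case (Suc j)
  have "profile N c x (Suc (Suc j) * lv) = profile N c x (lv + Suc j * lv)" by simp
  also have "\<dots> = profile_comp (profile N c x lv) (profile N c (\<lambda>k. x (lv + k)) (Suc j * lv))"
    by (rule profile_append)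
  also have "profile N c x lv = profile N c v lv" using Suc.prems by (simp add: profile_cong)
  also have "profile N c (\<lambda>k. x (lv + k)) (Suc j * lv) = profile N c v lv"
    using Suc.prems by (intro Suc.hyps) simp
  finally show ?case using idem by simp
qed

definition lasso_word :: "(nat \<Rightarrow> nat) \<Rightarrow> nat \<Rightarrow> (nat \<Rightarrow> nat) \<Rightarrow> nat \<Rightarrow> nat \<Rightarrow> nat" where
  "lasso_word u lu v lv = (\<lambda>k. if k < lu then u k else v ((k - lu) mod lv))"

lemma threshold_accepts_lasso_word_iff:
  assumes wf: "wf_wba N" and lu: "1 \<le> lu" and lv: "1 \<le> lv" and idem: "idempotent_pair N c u lu v lv"
  shows "threshold_accepts K N c (lasso_word u lu v lv)
      \<longleftrightarrow> lasso_accepts K N (profile N c u lu) (profile N c v lv)"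
proof -
  define w where "w = lasso_word u lu v lv"
  define t where "t i = (if i = 0 then 0 else lu + (i - 1) * lv)" for i
  have uv: "profile_comp (profile N c u lu) (profile N c v lv) = profile N c u lu"
    and vv: "profile_comp (profile N c v lv) (profile N c v lv) = profile N c v lv"
    using idem unfolding idempotent_pair_iff by simp_all
  have periodic: "profile N c (\<lambda>k. w (lu + i * lv + k)) (Suc j * lv) = profile N c v lv" for i j
    by (rule profile_periodic_word[OF vv]) (simp add: w_def lasso_word_def add.assoc mod_add_left_eq)
  have prefix: "profile N c w (lu + j * lv) = profile N c u lu" for j
  proof (induct j)
    case 0
    show ?case by simp (rule profile_cong, simp add: w_def lasso_word_def)
  next
    case (Suc j)
    have "profile N c w (lu + Suc j * lv) = profile N c w ((lu + j * lv) + Suc 0 * lv)"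
      by (simp add: algebra_simps)
    also have "\<dots> = profile_comp (profile N c w (lu + j * lv))
        (profile N c (\<lambda>k. w (lu + j * lv + k)) (Suc 0 * lv))"
      by (rule profile_append)
    finally show ?case using Suc periodic[of j 0] uv by simp
  qed
  have "strict_mono t" unfolding strict_mono_Suc_iff using lu lv by (auto simp: t_def)
  moreover have "t 0 = 0" by (simp add: t_def)
  moreover have "\<forall>j\<ge>1. profile N c w (t j) = profile N c u lu" using prefix by (auto simp: t_def)
  moreover have "\<forall>i j. 1 \<le> i \<longrightarrow> i < j \<longrightarrow> profile N c (\<lambda>k. w (t i + k)) (t j - t i) = profile N c v lv"
  proof (intro allI impI)
    fix i j :: nat assume "1 \<le> i" "i < j"
    then obtain i' d where "i = Suc i'" "j = i + Suc d"
      by (metis Suc_le_D One_nat_def less_iff_Suc_add add_Suc_right)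
    then have "t j - t i = Suc d * lv" "t i = lu + i' * lv" unfolding t_def by (simp_all add: algebra_simps)
    then show "profile N c (\<lambda>k. w (t i + k)) (t j - t i) = profile N c v lv" using periodic by simp
  qed
  ultimately show ?thesis using threshold_accepts_iff_lasso_accepts[OF wf] unfolding w_def by blast
qed

section \<open>Short words with the same joint profile\<close>

definition joint_profile :: "wba \<Rightarrow> wba \<Rightarrow> ereal \<Rightarrow> (nat \<Rightarrow> nat) \<Rightarrow> nat \<Rightarrow> (bool \<times> nat \<times> nat \<times> seg_flags) set" where
  "joint_profile N1 N2 c x l
      = {(z, p, q, ch). if z then profile N2 c x l p q ch else profile N1 c x l p q ch}"

lemma joint_profile_eq_iff: "joint_profile N1 N2 c x l = joint_profile N1 N2 c y l'
    \<longleftrightarrow> profile N1 c x l = profile N1 c y l' \<and> profile N2 c x l = profile N2 c y l'"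
proof
  assume J: "joint_profile N1 N2 c x l = joint_profile N1 N2 c y l'"
  have "profile N1 c x l p q ch \<longleftrightarrow> profile N1 c y l' p q ch" for p q ch
    using arg_cong[OF J, of "\<lambda>S. (False, p, q, ch) \<in> S"] by (simp add: joint_profile_def)
  moreover have "profile N2 c x l p q ch \<longleftrightarrow> profile N2 c y l' p q ch" for p q ch
    using arg_cong[OF J, of "\<lambda>S. (True, p, q, ch) \<in> S"] by (simp add: joint_profile_def)
  ultimately show "profile N1 c x l = profile N1 c y l' \<and> profile N2 c x l = profile N2 c y l'"
    by (auto intro!: ext)
qed (simp add: joint_profile_def)

lemma profile_states_less: "profile N c x l p q ch \<Longrightarrow> p < nstates N \<and> q < nstates N"
  unfolding profile_def by auto

definition profile_universe :: "nat \<Rightarrow> (bool \<times> nat \<times> nat \<times> seg_flags) set" where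
  "profile_universe M = UNIV \<times> {..<M} \<times> {..<M} \<times> UNIV"

lemma joint_profile_subset: "joint_profile N1 N2 c x l \<subseteq> profile_universe (nstates N1 + nstates N2)"
  unfolding joint_profile_def profile_universe_def by (auto dest: profile_states_less split: if_splits)

lemma card_seg_flags: "card (UNIV :: seg_flags set) \<le> 16"
proof -
  have "card (UNIV :: seg_flags set) \<le> card (UNIV :: (bool \<times> bool \<times> bool \<times> bool) set)"
    unfolding seg_flags_UNIV by (rule card_image_le) simp
  also have "\<dots> = 16"
    by (simp add: UNIV_Times_UNIV[symmetric] card_cartesian_product card_UNIV_bool del: UNIV_Times_UNIV)
  finally show ?thesis .
qed

lemma finite_profile_universe: "finite (profile_universe M)"
  unfolding profile_universe_def using finite_seg_flags by simp

lemma card_profile_universe: "card (profile_universe M) \<le> 32 * M * M"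
proof -
  have "card (profile_universe M) = 2 * (M * (M * card (UNIV :: seg_flags set)))"
    unfolding profile_universe_def by (simp add: card_cartesian_product card_UNIV_bool)
  also have "\<dots> \<le> 2 * (M * (M * 16))" using card_seg_flags by (intro mult_le_mono2) simp
  finally show ?thesis by simp
qed

text \<open>A joint profile is a set of tagged triples \<open>(z, p, q, flags)\<close>, of which there are at most
  \<open>2 * M * M * 16\<close> for \<open>M\<close> states in total; this bounds the number of joint profiles.\<close>

definition length_bound :: "nat \<Rightarrow> nat \<Rightarrow> nat" where
  "length_bound n1 n2 = 2 ^ (32 * (n1 + n2) * (n1 + n2))"

lemma card_Pow_profile_universe: "card (Pow (profile_universe (n1 + n2))) \<le> length_bound n1 n2"
  using card_profile_universe[of "n1 + n2"] finite_profile_universe[of "n1 + n2"]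
  by (simp add: card_Pow power_increasing length_bound_def)

lemma ex_repeated_joint_profile:
  assumes "length_bound (nstates N1) (nstates N2) < l"
  shows "\<exists>i j. 1 \<le> i \<and> i < j \<and> j \<le> l \<and> joint_profile N1 N2 c x i = joint_profile N1 N2 c x j"
proof -
  let ?F = "joint_profile N1 N2 c x"
  have "?F ` {1..l} \<subseteq> Pow (profile_universe (nstates N1 + nstates N2))" using joint_profile_subset by blast
  then have "card (?F ` {1..l}) \<le> card (Pow (profile_universe (nstates N1 + nstates N2)))"
    using finite_profile_universe by (intro card_mono) auto
  also have "\<dots> \<le> length_bound (nstates N1) (nstates N2)" by (rule card_Pow_profile_universe)
  also have "\<dots> < card {1..l}" using assms by simp
  finally have "\<not> inj_on ?F {1..l}" by (rule pigeonhole)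
  then obtain i j where "i \<in> {1..l}" "j \<in> {1..l}" "i \<noteq> j" "?F i = ?F j" unfolding inj_on_def by blast
  then show ?thesis by (metis atLeastAtMost_iff linorder_neqE_nat)
qed

lemma profile_cut_loop:
  assumes same: "profile N c x i = profile N c x j" and ij: "i \<le> j" "j \<le> l"
  shows "profile N c (\<lambda>k. if k < i then x k else x (k + (j - i))) (i + (l - j)) = profile N c x l"
proof -
  let ?x' = "\<lambda>k. if k < i then x k else x (k + (j - i))"
  have "profile N c ?x' (i + (l - j))
      = profile_comp (profile N c ?x' i) (profile N c (\<lambda>k. ?x' (i + k)) (l - j))"
    by (rule profile_append)
  also have "profile N c ?x' i = profile N c x i" by (rule profile_cong) simp
  also have "(\<lambda>k. ?x' (i + k)) = (\<lambda>k. x (j + k))" using ij by (intro ext) (simp add: add.commute)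
  also have "profile_comp (profile N c x i) (profile N c (\<lambda>k. x (j + k)) (l - j))
      = profile N c x (j + (l - j))"
    using same profile_append[of N c x j "l - j"] by simp
  also have "j + (l - j) = l" using ij by simp
  finally show ?thesis .
qed

lemma ex_short_word_same_joint_profile:
  fixes x :: "nat \<Rightarrow> nat"
  assumes "1 \<le> l" "\<forall>k<l. x k < m"
  shows "\<exists>x' l'. 1 \<le> l' \<and> l' \<le> length_bound (nstates N1) (nstates N2)
           \<and> (\<forall>k<l'. x' k < m) \<and> joint_profile N1 N2 c x' l' = joint_profile N1 N2 c x l"
  using assms
proof (induct l arbitrary: x rule: less_induct)
  case (less l)
  show ?case
  proof (cases "l \<le> length_bound (nstates N1) (nstates N2)")
    case True
    then show ?thesis using less.prems by blast
  next
    case False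
    then obtain i j where ij: "1 \<le> i" "i < j" "j \<le> l" "joint_profile N1 N2 c x i = joint_profile N1 N2 c x j"
      using ex_repeated_joint_profile by (metis not_le)
    define x' where "x' k = (if k < i then x k else x (k + (j - i)))" for k
    have "joint_profile N1 N2 c x' (i + (l - j)) = joint_profile N1 N2 c x l"
      using ij profile_cut_loop[of _ c x i j l] unfolding joint_profile_eq_iff x'_def by simp
    moreover have "i + (l - j) < l" "1 \<le> i + (l - j)" "\<forall>k<i + (l - j). x' k < m"
      using less.prems ij unfolding x'_def by auto
    ultimately show ?thesis using less.hyps[of "i + (l - j)" x'] by metis
  qed
qed

section \<open>Ramsey factorisation\<close>

lemma ex_ramsey_factorisation:
  fixes w :: "nat \<Rightarrow> nat"
  shows "\<exists>e::nat \<Rightarrow> nat. strict_mono e \<and> (\<forall>i j i' j'. i < j \<longrightarrow> i' < j' \<longrightarrow>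
           joint_profile N1 N2 c (\<lambda>k. w (e i + k)) (e j - e i)
               = joint_profile N1 N2 c (\<lambda>k. w (e i' + k)) (e j' - e i'))"
proof -
  define Pw where "Pw = Pow (profile_universe (nstates N1 + nstates N2))"
  have fPw: "finite Pw" unfolding Pw_def using finite_profile_universe by simp
  obtain h where h: "bij_betw h Pw {0..<card Pw}" using ex_bij_betw_finite_nat[OF fPw] by blast
  define G where "G i j = joint_profile N1 N2 c (\<lambda>k. w (i + k)) (j - i)" for i j
  have GP: "G i j \<in> Pw" for i j unfolding G_def Pw_def using joint_profile_subset by blast
  define f where "f X = h (G (Min X) (Max X))" for X
  have part: "\<forall>x\<in>(UNIV::nat set). \<forall>y\<in>UNIV. x \<noteq> y \<longrightarrow> f {x, y} < card Pw"
    using h GP unfolding f_def bij_betw_def by auto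
  obtain Y tc where Y: "infinite Y" "\<forall>x\<in>Y. \<forall>y\<in>Y. x \<noteq> y \<longrightarrow> f {x, y} = tc"
    using Ramsey2[OF infinite_UNIV_nat part] by blast
  define e where "e = enumerate Y"
  have sm: "strict_mono e" unfolding e_def strict_mono_def using Y(1) by (simp add: enumerate_mono)
  have eY: "e i \<in> Y" for i unfolding e_def using Y(1) by (rule enumerate_in_set)
  have col: "h (G (e i) (e j)) = tc" if "i < j" for i j
  proof -
    have "e i < e j" using sm that by (simp add: strict_mono_less)
    then have "Min {e i, e j} = e i" "Max {e i, e j} = e j" by auto
    then show ?thesis using Y(2) eY[of i] eY[of j] \<open>e i < e j\<close> unfolding f_def by force
  qed
  have "G (e i) (e j) = G (e i') (e j')" if "i < j" "i' < j'" for i j i' j'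
    using col[OF that(1)] col[OF that(2)] h GP unfolding bij_betw_def inj_on_def by metis
  then show ?thesis using sm unfolding G_def by blast
qed

lemma profile_ramsey_prefix:
  fixes e :: "nat \<Rightarrow> nat"
  assumes e: "strict_mono e" and j: "1 \<le> j"
    and same: "\<And>i j i' j'. i < j \<Longrightarrow> i' < j' \<Longrightarrow>
      profile N c (\<lambda>k. w (e i + k)) (e j - e i) = profile N c (\<lambda>k. w (e i' + k)) (e j' - e i')"
  shows "profile N c w (e j) = profile N c w (e 1)"
proof -
  have "e 0 < e j" "e 0 < e 1" using e j by (simp_all add: strict_mono_less)
  then have "profile N c w (e i)
      = profile_comp (profile N c w (e 0)) (profile N c (\<lambda>k. w (e 0 + k)) (e i - e 0))"
    if "i = j \<or> i = 1" for i using that profile_append[of N c w "e 0" "e i - e 0"] by auto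
  then show ?thesis using same[of 0 j 0 1] j by simp
qed

lemma idempotent_pair_ramsey:
  fixes e :: "nat \<Rightarrow> nat"
  assumes e: "strict_mono e"
    and same: "\<And>i j i' j'. i < j \<Longrightarrow> i' < j' \<Longrightarrow>
      profile N c (\<lambda>k. w (e i + k)) (e j - e i) = profile N c (\<lambda>k. w (e i' + k)) (e j' - e i')"
  shows "idempotent_pair N c w (e 1) (\<lambda>k. w (e 1 + k)) (e 2 - e 1)"
proof -
  have mono: "e 1 < e 2" "e 2 < e 3" using e by (simp_all add: strict_mono_less)
  have "profile N c (concat_word w (e 1) (\<lambda>k. w (e 1 + k))) (e 2) = profile N c w (e 2)"
    using mono by (intro profile_cong) (auto simp: concat_word_def)
  then have "profile N c (concat_word w (e 1) (\<lambda>k. w (e 1 + k))) (e 1 + (e 2 - e 1)) = profile N c w (e 2)"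
    using mono by simp
  also have "\<dots> = profile N c w (e 1)" by (rule profile_ramsey_prefix[OF e _ same]) simp_all
  finally have prefix: "profile N c (concat_word w (e 1) (\<lambda>k. w (e 1 + k))) (e 1 + (e 2 - e 1))
      = profile N c w (e 1)" .
  let ?v = "\<lambda>k. w (e 1 + k)"
  have "profile N c ?v (e 2 - e 1) = profile N c ?v ((e 2 - e 1) + (e 3 - e 2))"
    using same[of 1 2 1 3] mono by simp
  also have "\<dots> = profile_comp (profile N c ?v (e 2 - e 1)) (profile N c (\<lambda>k. w (e 2 + k)) (e 3 - e 2))"
    using profile_append[of N c ?v "e 2 - e 1" "e 3 - e 2"] mono by (simp add: add.assoc)
  also have "profile N c (\<lambda>k. w (e 2 + k)) (e 3 - e 2) = profile N c ?v (e 2 - e 1)"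
    using same[of 2 3 1 2] by simp
  finally have "profile_comp (profile N c ?v (e 2 - e 1)) (profile N c ?v (e 2 - e 1))
      = profile N c ?v (e 2 - e 1)"
    by simp
  then show ?thesis using prefix unfolding idempotent_pair_iff profile_concat_word by simp
qed

lemma threshold_accepts_iff_ramsey_lasso:
  fixes e :: "nat \<Rightarrow> nat"
  assumes wf: "wf_wba N" and e: "strict_mono e"
    and same: "\<And>i j i' j'. i < j \<Longrightarrow> i' < j' \<Longrightarrow>
      profile N c (\<lambda>k. w (e i + k)) (e j - e i) = profile N c (\<lambda>k. w (e i' + k)) (e j' - e i')"
  shows "threshold_accepts K N c w \<longleftrightarrow>
    lasso_accepts K N (profile N c w (e 1)) (profile N c (\<lambda>k. w (e 1 + k)) (e 2 - e 1))"
proof (rule threshold_accepts_iff_lasso_accepts[OF wf])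
  define t where "t i = (if i = 0 then 0 else e i)" for i
  have "e n < e (Suc n)" for n using e by (simp add: strict_mono_less)
  moreover have "0 < e (Suc n)" for n using strict_monoD[OF e, of 0 "Suc n"] by linarith
  ultimately
  show "strict_mono t" unfolding strict_mono_Suc_iff t_def by simp
  show "t 0 = 0" by (simp add: t_def)
  show "\<forall>j\<ge>1. profile N c w (t j) = profile N c w (e 1)"
    unfolding t_def using profile_ramsey_prefix[OF e _ same] by (metis not_one_le_zero)
  show "\<forall>i j. 1 \<le> i \<longrightarrow> i < j
      \<longrightarrow> profile N c (\<lambda>k. w (t i + k)) (t j - t i) = profile N c (\<lambda>k. w (e 1 + k)) (e 2 - e 1)"
  proof (intro allI impI)
    fix i j :: nat assume "1 \<le> i" "i < j"
    then show "profile N c (\<lambda>k. w (t i + k)) (t j - t i) = profile N c (\<lambda>k. w (e 1 + k)) (e 2 - e 1)"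
      using same[of i j 1 2] by (simp add: t_def)
  qed
qed

definition lasso_inclusion :: "valuation_kind \<Rightarrow> wba \<Rightarrow> wba \<Rightarrow> ereal \<Rightarrow> (nat \<Rightarrow> nat) \<Rightarrow> nat \<Rightarrow> (nat \<Rightarrow> nat)
    \<Rightarrow> nat \<Rightarrow> bool" where
  "lasso_inclusion K N N' c u lu v lv \<longleftrightarrow> (idempotent_pair N c u lu v lv \<longrightarrow> idempotent_pair N' c u lu v lv
      \<longrightarrow> lasso_accepts K N (profile N c u lu) (profile N c v lv)
          \<longrightarrow> lasso_accepts K N' (profile N' c u lu) (profile N' c v lv))"

lemma lasso_inclusion_cong:
  assumes "\<forall>k<lu. u k = u' k" "\<forall>k<lv. v k = v' k"
  shows "lasso_inclusion K N N' c u lu v lv = lasso_inclusion K N N' c u' lu v' lv"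
proof -
  have "profile A c u lu = profile A c u' lu" "profile A c v lv = profile A c v' lv" for A
    using assms by (auto intro: profile_cong)
  then show ?thesis unfolding lasso_inclusion_def idempotent_pair_iff by simp
qed

lemma lasso_inclusion_if_threshold_inclusion:
  assumes wf1: "wf_wba N1" and wf2: "wf_wba N2"
    and incl: "\<forall>w. (\<forall>i. w i < m) \<longrightarrow> threshold_accepts K N1 c w \<longrightarrow> threshold_accepts K N2 c w"
    and lu: "1 \<le> lu" and lv: "1 \<le> lv" and u: "\<forall>k<lu. u k < m" and v: "\<forall>k<lv. v k < m"
  shows "lasso_inclusion K N1 N2 c u lu v lv"
  unfolding lasso_inclusion_def
proof (intro impI)
  assume "idempotent_pair N1 c u lu v lv" "idempotent_pair N2 c u lu v lv"
    "lasso_accepts K N1 (profile N1 c u lu) (profile N1 c v lv)"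
  moreover have "\<forall>i. lasso_word u lu v lv i < m" using lv u v unfolding lasso_word_def by auto
  ultimately show "lasso_accepts K N2 (profile N2 c u lu) (profile N2 c v lv)"
    using incl threshold_accepts_lasso_word_iff[OF wf1 lu lv] threshold_accepts_lasso_word_iff[OF wf2 lu
      lv] by blast
qed

lemma threshold_inclusion_if_short_lasso_inclusions:
  fixes N1 N2 :: wba
  defines "B \<equiv> length_bound (nstates N1) (nstates N2)"
  assumes wf1: "wf_wba N1" and wf2: "wf_wba N2"
    and short: "\<And>u lu v lv. 1 \<le> lu \<Longrightarrow> lu \<le> B \<Longrightarrow> 1 \<le> lv \<Longrightarrow> lv \<le> B
      \<Longrightarrow> \<forall>k<lu. u k < m \<Longrightarrow> \<forall>k<lv. v k < m \<Longrightarrow> lasso_inclusion K N1 N2 c u lu v lv"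
    and wm: "\<forall>i. w i < m" and L1: "threshold_accepts K N1 c w"
  shows "threshold_accepts K N2 c w"
proof -
  obtain e :: "nat \<Rightarrow> nat" where e: "strict_mono e" and eq: "\<forall>i j i' j'. i < j \<longrightarrow> i' < j' \<longrightarrow>
         joint_profile N1 N2 c (\<lambda>k. w (e i + k)) (e j - e i)
             = joint_profile N1 N2 c (\<lambda>k. w (e i' + k)) (e j' - e i')"
    using ex_ramsey_factorisation by blast
  let ?v = "\<lambda>k. w (e 1 + k)" and ?lv = "e 2 - e 1"
  have same1: "profile N1 c (\<lambda>k. w (e i + k)) (e j - e i) = profile N1 c (\<lambda>k. w (e i' + k)) (e j' - e i')"
    and same2: "profile N2 c (\<lambda>k. w (e i + k)) (e j - e i) = profile N2 c (\<lambda>k. w (e i' + k)) (e j' - e i')"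
    if "i < j" "i' < j'" for i j i' j'
    using eq that unfolding joint_profile_eq_iff by blast+
  have "1 \<le> e 1" "1 \<le> ?lv" using strict_monoD[OF e, of 0 1] strict_monoD[OF e, of 1 2] by simp_all
  obtain u' lu' where u': "1 \<le> lu'" "lu' \<le> B" "\<forall>k<lu'. u' k < m"
      "joint_profile N1 N2 c u' lu' = joint_profile N1 N2 c w (e 1)"
    using ex_short_word_same_joint_profile[OF \<open>1 \<le> e 1\<close>, of w m N1 N2 c] wm unfolding B_def by blast
  obtain v' lv' where v': "1 \<le> lv'" "lv' \<le> B" "\<forall>k<lv'. v' k < m"
      "joint_profile N1 N2 c v' lv' = joint_profile N1 N2 c ?v ?lv"
    using ex_short_word_same_joint_profile[OF \<open>1 \<le> ?lv\<close>, of ?v m N1 N2 c] wm unfolding B_def by blast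
  have hu: "profile N1 c u' lu' = profile N1 c w (e 1)" "profile N2 c u' lu' = profile N2 c w (e 1)"
    using u'(4) unfolding joint_profile_eq_iff by blast+
  have hv: "profile N1 c v' lv' = profile N1 c ?v ?lv" "profile N2 c v' lv' = profile N2 c ?v ?lv"
    using v'(4) unfolding joint_profile_eq_iff by blast+
  have "idempotent_pair N1 c u' lu' v' lv'" "idempotent_pair N2 c u' lu' v' lv'"
    using idempotent_pair_ramsey[OF e same1] idempotent_pair_ramsey[OF e same2] hu hv
    unfolding idempotent_pair_iff by simp_all
  moreover have "lasso_accepts K N1 (profile N1 c u' lu') (profile N1 c v' lv')"
    using threshold_accepts_iff_ramsey_lasso[OF wf1 e same1] L1 hu hv by simp
  ultimately have "lasso_accepts K N2 (profile N2 c u' lu') (profile N2 c v' lv')"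
    using short[OF u'(1,2) v'(1,2) u'(3) v'(3)] unfolding lasso_inclusion_def by blast
  then show "threshold_accepts K N2 c w" using threshold_accepts_iff_ramsey_lasso[OF wf2 e same2] hu hv
    by simp
qed

theorem threshold_inclusion_iff_short_lasso_inclusions:
  assumes wf1: "wf_wba N1" and wf2: "wf_wba N2"
  shows "(\<forall>w. (\<forall>i. w i < m) \<longrightarrow> threshold_accepts K N1 c w \<longrightarrow> threshold_accepts K N2 c w) \<longleftrightarrow>
    (\<forall>u lu v lv. 1 \<le> lu \<longrightarrow> lu \<le> length_bound (nstates N1) (nstates N2) \<longrightarrow> 1 \<le> lv
       \<longrightarrow> lv \<le> length_bound (nstates N1) (nstates N2) \<longrightarrow> (\<forall>k<lu. u k < m) \<longrightarrow> (\<forall>k<lv. v k < m)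
       \<longrightarrow> lasso_inclusion K N1 N2 c u lu v lv)"
  using lasso_inclusion_if_threshold_inclusion[OF wf1 wf2]
    threshold_inclusion_if_short_lasso_inclusions[OF wf1 wf2]
  by blast

section \<open>Behaviours and thresholds\<close>

lemma liminf_val_in_range:
  fixes D :: "nat \<Rightarrow> ereal"
  assumes fin: "finite (range D)"
  shows "liminf_val D \<in> insert \<infinity> (insert (- \<infinity>) (range D))"
proof -
  have INF_in: "(INF k\<in>A. D k) \<in> range D" if "A \<noteq> {}" for A
    using INF_attained[OF finite_subset[OF _ fin] that] by auto
  show ?thesis
  proof (cases "infinite {k. D k \<noteq> \<infinity>}")
    case True
    define g where "g i = (INF k \<in> {k. k \<ge> i \<and> D k \<noteq> \<infinity>}. D k)" for i
    have g: "range g \<subseteq> range D"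
      unfolding g_def using True by (auto intro!: INF_in simp: infinite_nat_iff_unbounded_le)
    then obtain i0 where "(SUP i. g i) = g i0" using SUP_attained[of g UNIV] finite_subset[OF _ fin] by blast
    then show ?thesis using True g by (auto simp: liminf_val_def g_def)
  next
    case False
    then show ?thesis using INF_in[of "{k. D k \<noteq> \<infinity>}"] by (auto simp: liminf_val_def)
  qed
qed

lemma limsup_val_in_range:
  fixes D :: "nat \<Rightarrow> ereal"
  assumes fin: "finite (range D)"
  shows "limsup_val D \<in> insert \<infinity> (insert (- \<infinity>) (range D))"
proof -
  have SUP_in: "(SUP k\<in>A. D k) \<in> range D" if "A \<noteq> {}" for A
    using SUP_attained[OF finite_subset[OF _ fin] that] by auto
  show ?thesis
  proof (cases "infinite {k. D k \<noteq> \<infinity>}")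
    case True
    define g where "g i = (SUP k \<in> {k. k \<ge> i \<and> D k \<noteq> \<infinity>}. D k)" for i
    have g: "range g \<subseteq> range D"
      unfolding g_def using True by (auto intro!: SUP_in simp: infinite_nat_iff_unbounded_le)
    then obtain i0 where "(INF i. g i) = g i0" using INF_attained[of g UNIV] finite_subset[OF _ fin] by blast
    then show ?thesis using True g by (auto simp: limsup_val_def g_def)
  next
    case False
    then show ?thesis using SUP_in[of "{k. D k \<noteq> \<infinity>}"] by (auto simp: limsup_val_def)
  qed
qed

lemma supminf_val_in_range:
  fixes D :: "nat \<Rightarrow> ereal"
  assumes fin: "finite (range D)"
  shows "supminf_val D \<in> insert \<infinity> (insert (- \<infinity>) (range D))"
  using SUP_attained[OF finite_subset[OF _ fin], of D "{k. D k \<noteq> \<infinity>}"] by (auto simp: supminf_val_def)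

lemma omega_val_in_range:
  fixes D :: "nat \<Rightarrow> ereal"
  assumes "finite (range D)"
  shows "omega_val K D \<in> insert \<infinity> (insert (- \<infinity>) (range D))"
  using liminf_val_in_range[OF assms] limsup_val_in_range[OF assms] supminf_val_in_range[OF assms]
  by (cases K) auto

definition weights :: "wba \<Rightarrow> nat \<Rightarrow> qbar set" where
  "weights N m = {wt N q a p | q a p. q < nstates N \<and> a < m \<and> p < nstates N}"

lemma finite_weights: "finite (weights N m)"
proof -
  have "weights N m = (\<lambda>(q, a, p). wt N q a p) ` ({..<nstates N} \<times> {..<m} \<times> {..<nstates N})"
    unfolding weights_def by force
  then show ?thesis by simp
qed

definition weight_values :: "wba \<Rightarrow> nat \<Rightarrow> ereal set" where
  "weight_values N m = insert \<infinity> (insert (- \<infinity>) (to_ereal ` weights N m))"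

lemma finite_weight_values: "finite (weight_values N m)"
  unfolding weight_values_def using finite_weights by simp

lemma range_run_weights_subset: "successful_run N \<rho> \<Longrightarrow> \<forall>i. w i < m \<Longrightarrow> range (run_weights N w \<rho>) \<subseteq> weights N m"
proof
  fix y assume s: "successful_run N \<rho>" and wm: "\<forall>i. w i < m" and "y \<in> range (run_weights N w \<rho>)"
  then obtain j where y: "y = wt N (\<rho> j) (w j) (\<rho> (Suc j))" unfolding run_weights_def by auto
  have "\<rho> j < nstates N" "w j < m" "\<rho> (Suc j) < nstates N" using s wm unfolding successful_run_def by auto
  then show "y \<in> weights N m" unfolding weights_def y by blast
qed

lemma run_weight_in_weight_values:
  assumes "successful_run N \<rho>" "\<forall>i. w i < m"
  shows "run_weight K N w \<rho> \<in> weight_values N m"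
proof -
  have r: "range (run_weights N w \<rho>) \<subseteq> weights N m" by (rule range_run_weights_subset[OF assms])
  then have "finite (range (\<lambda>j. to_ereal (run_weights N w \<rho> j)))"
    using finite_weights by (metis finite_imageI finite_subset image_image)
  from omega_val_in_range[OF this, of K] r show ?thesis
    unfolding run_weight_def run_weights_def weight_values_def by auto
qed

lemma le_behavior_iff:
  assumes wm: "\<forall>i. w i < m" and c: "c \<noteq> - \<infinity>"
  shows "c \<le> behavior K N w \<longleftrightarrow> threshold_accepts K N c w"
proof -
  have fin: "finite ((\<lambda>\<rho>. run_weight K N w \<rho>) ` {\<rho>. successful_run N \<rho>})"
    by (rule finite_subset[OF _ finite_weight_values[of N m]])
      (use run_weight_in_weight_values[OF _ wm] in auto)
  have "c \<le> behavior K N w \<longleftrightarrow> (\<exists>\<rho>\<in>{\<rho>. successful_run N \<rho>}. c \<le> run_weight K N w \<rho>)"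
    unfolding behavior_def by (rule le_SUP_finite_iff[OF fin c])
  also have "\<dots> \<longleftrightarrow> threshold_accepts K N c w"
  proof -
    have "c \<le> run_weight K N w \<rho> \<longleftrightarrow> meets_threshold K c (run_weights N w \<rho>)" if "successful_run N \<rho>" for \<rho>
    proof -
      have "finite (range (run_weights N w \<rho>))"
        using range_run_weights_subset[OF that wm] finite_weights finite_subset by blast
      from le_omega_val_iff[OF this c, of K] show ?thesis unfolding run_weight_def run_weights_def .
    qed
    then show ?thesis unfolding threshold_accepts_def by auto
  qed
  finally show ?thesis .
qed

lemma behavior_in_weight_values:
  assumes wm: "\<forall>i. w i < m"
  shows "behavior K N w \<in> weight_values N m"
proof (cases "{\<rho>. successful_run N \<rho>} = {}")
  case True
  have "behavior K N w = - \<infinity>" unfolding behavior_def True by (simp add: bot_ereal_def)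
  then show ?thesis unfolding weight_values_def by simp
next
  case False
  have fin: "finite ((\<lambda>\<rho>. run_weight K N w \<rho>) ` {\<rho>. successful_run N \<rho>})"
    by (rule finite_subset[OF _ finite_weight_values[of N m]])
      (use run_weight_in_weight_values[OF _ wm] in auto)
  obtain \<rho> where "successful_run N \<rho>" "behavior K N w = run_weight K N w \<rho>"
    using SUP_attained[OF fin False] unfolding behavior_def by auto
  then show ?thesis using run_weight_in_weight_values[OF _ wm] by simp
qed

theorem behavior_inclusion_iff_thresholds:
  "(\<forall>w. (\<forall>i. w i < m) \<longrightarrow> behavior K N w \<le> behavior K N' w) \<longleftrightarrow>
   (\<forall>c\<in>insert \<infinity> (to_ereal ` weights N m). c \<noteq> - \<infinity>
       \<longrightarrow> (\<forall>w. (\<forall>i. w i < m) \<longrightarrow> threshold_accepts K N c w \<longrightarrow> threshold_accepts K N' c w))"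
proof
  assume H: "\<forall>w. (\<forall>i. w i < m) \<longrightarrow> behavior K N w \<le> behavior K N' w"
  show "\<forall>c\<in>insert \<infinity> (to_ereal ` weights N m). c \<noteq> - \<infinity>
      \<longrightarrow> (\<forall>w. (\<forall>i. w i < m) \<longrightarrow> threshold_accepts K N c w \<longrightarrow> threshold_accepts K N' c w)"
  proof (intro ballI impI allI)
    fix c w assume c: "c \<noteq> - \<infinity>" and wm: "\<forall>i. w i < m" and L: "threshold_accepts K N c w"
    have "c \<le> behavior K N w" using le_behavior_iff[OF wm c] L by simp
    also have "\<dots> \<le> behavior K N' w" using H wm by blast
    finally show "threshold_accepts K N' c w" using le_behavior_iff[OF wm c] by simp
  qed
next
  assume H: "\<forall>c\<in>insert \<infinity> (to_ereal ` weights N m). c \<noteq> - \<infinity>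
      \<longrightarrow> (\<forall>w. (\<forall>i. w i < m) \<longrightarrow> threshold_accepts K N c w \<longrightarrow> threshold_accepts K N' c w)"
  show "\<forall>w. (\<forall>i. w i < m) \<longrightarrow> behavior K N w \<le> behavior K N' w"
  proof (intro allI impI)
    fix w :: "nat \<Rightarrow> nat" assume wm: "\<forall>i. w i < m"
    define b where "b = behavior K N w"
    show "behavior K N w \<le> behavior K N' w"
    proof (cases "b = - \<infinity>")
      case True then show ?thesis unfolding b_def by simp
    next
      case False
      have "b \<in> insert \<infinity> (to_ereal ` weights N m)" using behavior_in_weight_values[OF wm, of K N] False
        unfolding b_def weight_values_def by auto
      moreover have "threshold_accepts K N b w" using le_behavior_iff[OF wm False, of K N]
        unfolding b_def by simp
      ultimately have "threshold_accepts K N' b w" using H wm False by blast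
      then show ?thesis using le_behavior_iff[OF wm False, of K N'] unfolding b_def by simp
    qed
  qed
qed



section \<open>The decision procedure on codes\<close>

text \<open>Finite words of length \<open>l\<close> over \<open>{0..<m}\<close> and runs of length \<open>l\<close> over \<open>n\<close> states are coded by
  the base \<open>m\<close>, respectively base \<open>n\<close>, digits of a number, least significant digit first.\<close>


definition digit :: "nat \<Rightarrow> nat \<Rightarrow> nat \<Rightarrow> nat" where
  "digit b r k = r div b ^ k mod b"

lemma computable_digit: "computable k a \<Longrightarrow> computable k b \<Longrightarrow> computable k c
    \<Longrightarrow> computable k (\<lambda>e. digit (a e) (b e) (c e))"
  unfolding digit_def by (intro computable_intros)

definition weight_code :: "nat \<Rightarrow> nat \<Rightarrow> nat \<Rightarrow> nat \<Rightarrow> nat \<Rightarrow> nat" where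
  "weight_code m a q s p = nth_code (nth_code a 1) ((q * m + s) * nth_code a 0 + p)"

lemma computable_weight_code: "computable k a \<Longrightarrow> computable k q \<Longrightarrow> computable k s \<Longrightarrow> computable k p
    \<Longrightarrow> computable k (\<lambda>e. weight_code m (a e) (q e) (s e) (p e))"
  unfolding weight_code_def by (intro computable_intros computable_nth_code)

definition pos_part_code :: "nat \<Rightarrow> nat" where "pos_part_code y = (if y mod 2 = 0 then y div 2 else 0)"
definition neg_part_code :: "nat \<Rightarrow> nat" where "neg_part_code y = (if y mod 2 = 0 then 0 else y div 2 + 1)"

lemma computable_pos_part_code: "computable k a \<Longrightarrow> computable k (\<lambda>e. pos_part_code (a e))"
  unfolding pos_part_code_def by (intro computable_intros)
lemma computable_neg_part_code: "computable k a \<Longrightarrow> computable k (\<lambda>e. neg_part_code (a e))"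
  unfolding neg_part_code_def by (intro computable_intros)

text \<open>Comparison of fraction codes by cross-multiplication, with numerators split into positive and
  negative parts to stay within \<^typ>\<open>nat\<close>; a threshold code 1 (\<infinity>) is never reached.\<close>

definition ge_code :: "nat \<Rightarrow> nat \<Rightarrow> bool" where
  "ge_code y cc \<longleftrightarrow> cc \<noteq> 1 \<and>
     pos_part_code (fst_decode (cc - 2)) * (snd_decode (y - 2) div 2)
       + neg_part_code (fst_decode (y - 2)) * (snd_decode (cc - 2) div 2)
     \<le> pos_part_code (fst_decode (y - 2)) * (snd_decode (cc - 2) div 2)
       + neg_part_code (fst_decode (cc - 2)) * (snd_decode (y - 2) div 2)"

lemma decidable_ge_code: "computable k a \<Longrightarrow> computable k b \<Longrightarrow> decidable k (\<lambda>e. ge_code (a e) (b e))"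
  unfolding ge_code_def
  by (intro computable_intros computable_pos_part_code computable_neg_part_code computable_fst_decode
      computable_snd_decode)

definition flags_code :: "nat \<Rightarrow> nat \<Rightarrow> nat \<Rightarrow> nat \<Rightarrow> nat \<Rightarrow> nat \<Rightarrow> nat" where
  "flags_code m a cc x l r =
     (if \<exists>k<l. mem_code (nth_code a 3) (digit (nth_code a 0) r (Suc k)) then 1 else 0)
   + (if \<exists>k<l. weight_code m a (digit (nth_code a 0) r k) (digit m x k) (digit (nth_code a 0) r (Suc k))
       = 0 then 2 else 0)
   + (if \<exists>k<l. 2 \<le> weight_code m a (digit (nth_code a 0) r k) (digit m x k) (digit (nth_code a 0) r (Suc k))
          \<and> \<not> ge_code (weight_code m a (digit (nth_code a 0) r k) (digit m x k)
              (digit (nth_code a 0) r (Suc k))) cc then 4 else 0)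
   + (if \<exists>k<l. 2 \<le> weight_code m a (digit (nth_code a 0) r k) (digit m x k) (digit (nth_code a 0) r (Suc k))
          \<and> ge_code (weight_code m a (digit (nth_code a 0) r k) (digit m x k)
              (digit (nth_code a 0) r (Suc k))) cc then 8 else 0)"

lemma computable_flags_code_env: "computable 5 (\<lambda>e. flags_code m (e 0) (e 1) (e 2) (e 3) (e 4))"
  unfolding flags_code_def
    by (intro computable_intros computable_nth_code decidable_mem_code computable_digit
      computable_weight_code decidable_ge_code; simp)


lemma computable_flags_code: "computable k a \<Longrightarrow> computable k b \<Longrightarrow> computable k c \<Longrightarrow> computable k d
    \<Longrightarrow> computable k f \<Longrightarrow>
    computable k (\<lambda>e. flags_code m (a e) (b e) (c e) (d e) (f e))"
  using computable_comp_list[OF computable_flags_code_env, of "[a, b, c, d, f]" k]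
    by (simp add: numeral_eq_Suc)

definition profile_code :: "nat \<Rightarrow> nat \<Rightarrow> nat \<Rightarrow> nat \<Rightarrow> nat \<Rightarrow> nat \<Rightarrow> nat \<Rightarrow> nat \<Rightarrow> bool" where
  "profile_code m a cc x l p q ch
      \<longleftrightarrow> (\<exists>r<nth_code a 0 ^ Suc l. digit (nth_code a 0) r 0 = p \<and> digit (nth_code a 0) r l = q
          \<and> flags_code m a cc x l r = ch)"

lemma decidable_profile_code_env: "decidable 7 (\<lambda>e. profile_code m (e 0) (e 1) (e 2) (e 3) (e 4) (e 5) (e 6))"
  unfolding profile_code_def
    by (intro computable_intros computable_nth_code computable_digit computable_flags_code; simp)

lemma decidable_profile_code: "computable k a \<Longrightarrow> computable k b \<Longrightarrow> computable k c \<Longrightarrow> computable k d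
    \<Longrightarrow> computable k f \<Longrightarrow> computable k g \<Longrightarrow> computable k h \<Longrightarrow>
    decidable k (\<lambda>e. profile_code m (a e) (b e) (c e) (d e) (f e) (g e) (h e))"
  using decidable_comp_list[OF decidable_profile_code_env, of "[a, b, c, d, f, g, h]" k]
    by (simp add: numeral_eq_Suc)

definition same_profile_code :: "nat \<Rightarrow> nat \<Rightarrow> nat \<Rightarrow> nat \<Rightarrow> nat \<Rightarrow> nat \<Rightarrow> nat \<Rightarrow> bool" where
  "same_profile_code m a cc x lx y ly
      \<longleftrightarrow> (\<forall>p<nth_code a 0. \<forall>q<nth_code a 0. \<forall>ch<16. profile_code m a cc x lx p q ch
          \<longleftrightarrow> profile_code m a cc y ly p q ch)"

lemma decidable_same_profile_code_env: "decidable 6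
    (\<lambda>e. same_profile_code m (e 0) (e 1) (e 2) (e 3) (e 4) (e 5))"
  unfolding same_profile_code_def
    by (intro computable_intros computable_nth_code decidable_profile_code; simp)

lemma decidable_same_profile_code: "computable k a \<Longrightarrow> computable k b \<Longrightarrow> computable k c \<Longrightarrow> computable k d
    \<Longrightarrow> computable k f \<Longrightarrow> computable k g \<Longrightarrow>
    decidable k (\<lambda>e. same_profile_code m (a e) (b e) (c e) (d e) (f e) (g e))"
  using decidable_comp_list[OF decidable_same_profile_code_env, of "[a, b, c, d, f, g]" k]
    by (simp add: numeral_eq_Suc)

definition idempotent_code :: "nat \<Rightarrow> nat \<Rightarrow> nat \<Rightarrow> nat \<Rightarrow> nat \<Rightarrow> nat \<Rightarrow> nat \<Rightarrow> bool" where
  "idempotent_code m a cc u lu v lv \<longleftrightarrow> same_profile_code m a cc (u + m ^ lu * v) (lu + lv) u lu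
      \<and> same_profile_code m a cc (v + m ^ lv * v) (lv + lv) v lv"

lemma decidable_idempotent_code_env: "decidable 6 (\<lambda>e. idempotent_code m (e 0) (e 1) (e 2) (e 3) (e 4) (e 5))"
  unfolding idempotent_code_def by (intro computable_intros decidable_same_profile_code; simp)

lemma decidable_idempotent_code: "computable k a \<Longrightarrow> computable k b \<Longrightarrow> computable k c \<Longrightarrow> computable k d
    \<Longrightarrow> computable k f \<Longrightarrow> computable k g \<Longrightarrow>
    decidable k (\<lambda>e. idempotent_code m (a e) (b e) (c e) (d e) (f e) (g e))"
  using decidable_comp_list[OF decidable_idempotent_code_env, of "[a, b, c, d, f, g]" k]
    by (simp add: numeral_eq_Suc)

definition flags_of_nat :: "nat \<Rightarrow> seg_flags" where
  "flags_of_nat n = SegFlags (n mod 2 = 1) (n div 2 mod 2 = 1) (n div 4 mod 2 = 1) (n div 8 mod 2 = 1)"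

definition lasso_flags_code :: "valuation_kind \<Rightarrow> nat \<Rightarrow> nat \<Rightarrow> bool" where
  "lasso_flags_code K na nb \<longleftrightarrow> final_seen (flags_of_nat nb) \<and> \<not> minf_seen (flags_of_nat na)
     \<and> \<not> minf_seen (flags_of_nat nb) \<and> flags_meet_threshold K (flags_of_nat na) (flags_of_nat nb)"

lemma decidable_lasso_flags_code:
  "computable k a \<Longrightarrow> computable k b \<Longrightarrow> decidable k (\<lambda>e. lasso_flags_code K (a e) (b e))"
  by (cases K; simp add: lasso_flags_code_def flags_of_nat_def; intro computable_intros)

definition lasso_accepts_code :: "valuation_kind \<Rightarrow> nat \<Rightarrow> nat \<Rightarrow> nat \<Rightarrow> nat \<Rightarrow> nat \<Rightarrow> nat \<Rightarrow> nat \<Rightarrow> bool" where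
  "lasso_accepts_code K m a cc u lu v lv
      \<longleftrightarrow> (\<exists>p<nth_code a 0. mem_code (nth_code a 2) p \<and> (\<exists>q<nth_code a 0. \<exists>na<16. \<exists>nb<16.
      profile_code m a cc u lu p q na \<and> profile_code m a cc v lv q q nb \<and> lasso_flags_code K na nb))"

lemma decidable_lasso_accepts_code_env: "decidable 6
    (\<lambda>e. lasso_accepts_code K m (e 0) (e 1) (e 2) (e 3) (e 4) (e 5))"
  unfolding lasso_accepts_code_def
    by (intro computable_intros computable_nth_code decidable_mem_code decidable_profile_code
      decidable_lasso_flags_code; simp)

lemma decidable_lasso_accepts_code: "computable k a \<Longrightarrow> computable k b \<Longrightarrow> computable k c \<Longrightarrow> computable k d
    \<Longrightarrow> computable k f \<Longrightarrow> computable k g \<Longrightarrow>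
    decidable k (\<lambda>e. lasso_accepts_code K m (a e) (b e) (c e) (d e) (f e) (g e))"
  using decidable_comp_list[OF decidable_lasso_accepts_code_env, of "[a, b, c, d, f, g]" k]
    by (simp add: numeral_eq_Suc)

text \<open>Indices below \<open>n * m * n\<close> run through the weight table; the next index stands for the
  threshold \<infinity>, coded 1.\<close>

definition threshold_code :: "nat \<Rightarrow> nat \<Rightarrow> nat \<Rightarrow> nat" where
  "threshold_code m a idx =
      (if idx < nth_code a 0 * m * nth_code a 0 then nth_code (nth_code a 1) idx else 1)"

lemma computable_threshold_code: "computable k a \<Longrightarrow> computable k b
    \<Longrightarrow> computable k (\<lambda>e. threshold_code m (a e) (b e))"
  unfolding threshold_code_def by (intro computable_intros computable_nth_code)

definition inclusion_test :: "valuation_kind \<Rightarrow> nat \<Rightarrow> nat \<Rightarrow> bool" where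
  "inclusion_test K m x \<longleftrightarrow>
    (let a = fst_decode x; a' = snd_decode x; B = length_bound (nth_code a 0) (nth_code a' 0) in
     \<forall>idx < nth_code a 0 * m * nth_code a 0 + 1. threshold_code m a idx \<noteq> 0 \<longrightarrow>
       (\<forall>lu < B + 1. \<forall>u < m ^ lu. \<forall>lv < B + 1. \<forall>v < m ^ lv. 1 \<le> lu \<longrightarrow> 1 \<le> lv
         \<longrightarrow> idempotent_code m a (threshold_code m a idx) u lu v lv
         \<longrightarrow> idempotent_code m a' (threshold_code m a idx) u lu v lv
         \<longrightarrow> lasso_accepts_code K m a (threshold_code m a idx) u lu v lv
         \<longrightarrow> lasso_accepts_code K m a' (threshold_code m a idx) u lu v lv))"

lemma decidable_inclusion_test_env: "decidable 1 (\<lambda>e. inclusion_test K m (e 0))"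
  unfolding inclusion_test_def length_bound_def Let_def
  by (intro computable_intros computable_nth_code computable_fst_decode computable_snd_decode
      computable_threshold_code decidable_idempotent_code decidable_lasso_accepts_code; simp)

lemma decidable_inclusion_test: "\<exists>f. \<forall>x. eval_recf f [x] (if inclusion_test K m x then 1 else 0)"
proof -
  obtain f where "\<forall>e. eval_recf f (map e [0..<1]) (if inclusion_test K m (e 0) then 1 else 0)"
    using decidable_inclusion_test_env[of K m] unfolding decidable_def computable_def by blast
  then have "eval_recf f [x] (if inclusion_test K m x then 1 else 0)" for x
    by (drule_tac x = "\<lambda>_. x" in spec) simp
  then show ?thesis by blast
qed



lemma digit_less: "0 < b \<Longrightarrow> digit b r k < b"
  unfolding digit_def by simp

lemma digit_0_add_mult: "0 < b \<Longrightarrow> a < b \<Longrightarrow> digit b (a + b * r) 0 = a"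
  unfolding digit_def by simp

lemma digit_Suc_add_mult: "0 < b \<Longrightarrow> a < b \<Longrightarrow> digit b (a + b * r) (Suc k) = digit b r k"
proof -
  assume b: "0 < b" and a: "a < b"
  have "(a + b * r) div b ^ Suc k = (a + b * r) div b div b ^ k" by (simp add: div_mult2_eq)
  also have "(a + b * r) div b = r" using a b by simp
  finally show ?thesis unfolding digit_def by simp
qed

lemma ex_digits: "0 < b \<Longrightarrow> \<forall>k<L. f k < b \<Longrightarrow> \<exists>r<b ^ L. \<forall>k<L. digit b r k = f k"
proof (induct L arbitrary: f)
  case 0
  then show ?case by (intro exI[of _ 0]) simp
next
  case (Suc L)
  have "\<forall>k<L. f (Suc k) < b" using Suc.prems by simp
  from Suc.hyps[OF Suc.prems(1) this] obtain r' where r': "r' < b ^ L" "\<forall>k<L. digit b r' k = f (Suc k)"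
    by blast
  have f0: "f 0 < b" using Suc by simp
  have "f 0 + b * r' < b ^ Suc L"
  proof -
    have "r' + 1 \<le> b ^ L" using r' by simp
    then have "b * (r' + 1) \<le> b * b ^ L" by (rule mult_le_mono2)
    then show ?thesis using f0 by (simp add: algebra_simps)
  qed
  moreover have "\<forall>k<Suc L. digit b (f 0 + b * r') k = f k"
  proof (intro allI impI)
    fix k assume "k < Suc L"
    then show "digit b (f 0 + b * r') k = f k"
      using Suc.prems f0 r'(2) by (cases k) (auto simp: digit_0_add_mult digit_Suc_add_mult)
  qed
  ultimately show ?case by blast
qed

lemma digit_add_mult_power: "0 < b \<Longrightarrow> x < b ^ lx
    \<Longrightarrow> digit b (x + b ^ lx * y) k = (if k < lx then digit b x k else digit b y (k - lx))"
proof (induct lx arbitrary: x k)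
  case 0
  then show ?case by simp
next
  case (Suc lx)
  define x0 where "x0 = x mod b"
  define x' where "x' = x div b"
  have x: "x = x0 + b * x'" unfolding x0_def x'_def by simp
  have x0: "x0 < b" unfolding x0_def using Suc by simp
  have x': "x' < b ^ lx" using Suc.prems unfolding x'_def by (simp add: div_less_iff_less_mult mult.commute)
  have e: "x + b ^ Suc lx * y = x0 + b * (x' + b ^ lx * y)" unfolding x by (simp add: algebra_simps)
  show ?case
  proof (cases k)
    case 0
    then show ?thesis using Suc.prems x0 unfolding e by (subst x) (simp add: digit_0_add_mult)
  next
    case (Suc k')
    have "digit b (x + b ^ Suc lx * y) k = digit b (x' + b ^ lx * y) k'"
      unfolding e Suc using Suc.prems(1) x0 by (simp add: digit_Suc_add_mult)
    also have "\<dots> = (if k' < lx then digit b x' k' else digit b y (k' - lx))"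
      using Suc.hyps[OF Suc.prems(1) x'] .
    also have "digit b x' k' = digit b x k" unfolding Suc using Suc.prems(1) x0
      by (subst x) (simp add: digit_Suc_add_mult)
    finally show ?thesis unfolding Suc by simp
  qed
qed

lemma digit_concat_word: "0 < b \<Longrightarrow> x < b ^ lx
    \<Longrightarrow> digit b (x + b ^ lx * y) = concat_word (digit b x) lx (digit b y)"
  by (rule ext) (simp add: digit_add_mult_power concat_word_def)

definition weight_list :: "nat \<Rightarrow> wba \<Rightarrow> nat list" where
  "weight_list m N = [enc_qbar (wt N q a p). q \<leftarrow> [0..<nstates N], a \<leftarrow> [0..<m], p \<leftarrow> [0..<nstates N]]"

lemma nth_code_enc_wba:
  "nth_code (enc_wba m N) 0 = nstates N"
  "nth_code (enc_wba m N) 1 = list_encode (weight_list m N)"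
  "nth_code (enc_wba m N) 2 = list_encode (filter (\<lambda>q. q \<in> init N) [0..<nstates N])"
  "nth_code (enc_wba m N) 3 = list_encode (filter (\<lambda>q. q \<in> fin N) [0..<nstates N])"
  unfolding enc_wba_def weight_list_def by (subst nth_code_list_encode; simp del: list_encode.simps)+

lemma mult_add_less_mult: "i < k \<Longrightarrow> j < b \<Longrightarrow> i * b + j < k * (b::nat)"
proof -
  assume "i < k" "j < b"
  then have "i * b + j < Suc i * b" by simp
  also have "\<dots> \<le> k * b" using \<open>i < k\<close> by (intro mult_le_mono1) simp
  finally show ?thesis .
qed

lemma nth_concat_uniform:
  "(\<forall>i<k. length (g i) = b) \<Longrightarrow> i < k \<Longrightarrow> j < b \<Longrightarrow> concat (map g [0..<k]) ! (i * b + j) = g i ! j"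
proof (induct k)
  case (Suc k)
  have len: "length (concat (map g [0..<k])) = k * b"
    using Suc.prems(1) by (induct k) auto
  show ?case
  proof (cases "i < k")
    case True
    then show ?thesis using Suc len mult_add_less_mult[OF True Suc.prems(3)] by (simp add: nth_append)
  next
    case False
    then have "i = k" using Suc.prems by simp
    then show ?thesis using len by (simp add: nth_append)
  qed
qed simp

lemma length_weight_list: "length (weight_list m N) = nstates N * m * nstates N"
  by (simp add: weight_list_def length_concat o_def sum_list_triv)

lemma nth_weight_list:
  assumes "q < nstates N" "a < m" "p < nstates N"
  shows "weight_list m N ! ((q * m + a) * nstates N + p) = enc_qbar (wt N q a p)"
proof -
  let ?n = "nstates N" and ?row = "\<lambda>q a. map (\<lambda>p. enc_qbar (wt N q a p)) [0..<nstates N]"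
  have "weight_list m N = concat (map (\<lambda>q. concat (map (?row q) [0..<m])) [0..<?n])"
    unfolding weight_list_def by (simp add: map_concat)
  also have "\<dots> ! (q * (m * ?n) + (a * ?n + p)) = concat (map (?row q) [0..<m]) ! (a * ?n + p)"
    using assms mult_add_less_mult[of a m p ?n]
    by (intro nth_concat_uniform) (simp_all add: length_concat o_def sum_list_triv)
  also have "\<dots> = enc_qbar (wt N q a p)" using assms nth_concat_uniform[of m "?row q" ?n a p] by simp
  finally show ?thesis by (simp add: algebra_simps)
qed

lemma set_weight_list: "y \<in> set (weight_list m N)
    \<longleftrightarrow> (\<exists>q a p. q < nstates N \<and> a < m \<and> p < nstates N \<and> y = enc_qbar (wt N q a p))"
  unfolding weight_list_def by force

lemma weight_code_enc_wba:
  assumes "q < nstates N" "a < m" "p < nstates N"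
  shows "weight_code m (enc_wba m N) q a p = enc_qbar (wt N q a p)"
proof -
  have "(q * m + a) * nstates N + p < nstates N * m * nstates N"
    using assms mult_add_less_mult[of "q * m + a" "nstates N * m" p "nstates N"] mult_add_less_mult[of q
      "nstates N" a m]
    by (simp add: algebra_simps)
  then show ?thesis unfolding weight_code_def nth_code_enc_wba
    using nth_weight_list[OF assms] by (simp add: nth_code_list_encode length_weight_list)
qed

lemma mem_code_init: "wf_wba N \<Longrightarrow> mem_code (nth_code (enc_wba m N) 2) q \<longleftrightarrow> q \<in> init N"
  unfolding nth_code_enc_wba mem_code_list_encode wf_wba_def by auto

lemma mem_code_fin: "wf_wba N \<Longrightarrow> mem_code (nth_code (enc_wba m N) 3) q \<longleftrightarrow> q \<in> fin N"
  unfolding nth_code_enc_wba mem_code_list_encode wf_wba_def by auto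


lemma pos_part_code_minus_neg_part_code: "int (pos_part_code (int_encode z)) - int
    (neg_part_code (int_encode z)) = z"
proof (cases "0 \<le> z")
  case True
  then show ?thesis by (simp add: int_encode_def sum_encode_def pos_part_code_def neg_part_code_def)
next
  case False
  then have "int_encode z = Suc (2 * nat (- z - 1))" by (simp add: int_encode_def sum_encode_def)
  then show ?thesis using False by (simp add: pos_part_code_def neg_part_code_def)
qed

lemma int_encode_pos_div_2: "0 < d \<Longrightarrow> int_encode d div 2 = nat d"
  by (simp add: int_encode_def sum_encode_def)

lemma enc_qbar_0_iff: "enc_qbar v = 0 \<longleftrightarrow> v = MInf"
  by (cases v) auto

lemma ge_code_Fin_iff:
  assumes cq: "cq \<noteq> MInf"
  shows "ge_code (enc_qbar (Fin r)) (enc_qbar cq) \<longleftrightarrow> to_ereal cq \<le> ereal (of_rat r)"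
proof (cases cq)
  case PInf
  then show ?thesis by (simp add: ge_code_def)
next
  case MInf
  then show ?thesis using cq by simp
next
  case (Fin s)
  obtain n1 d1 where q1: "quotient_of r = (n1, d1)" by (cases "quotient_of r")
  obtain n2 d2 where q2: "quotient_of s = (n2, d2)" by (cases "quotient_of s")
  have d1: "0 < d1" using quotient_of_denom_pos[OF q1] .
  have d2: "0 < d2" using quotient_of_denom_pos[OF q2] .
  define p1 where "p1 = pos_part_code (int_encode n1)"
  define g1 where "g1 = neg_part_code (int_encode n1)"
  define p2 where "p2 = pos_part_code (int_encode n2)"
  define g2 where "g2 = neg_part_code (int_encode n2)"
  have n1: "n1 = int p1 - int g1" and n2: "n2 = int p2 - int g2"
    using pos_part_code_minus_neg_part_code unfolding p1_def g1_def p2_def g2_def by metis+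
  have "ge_code (enc_qbar (Fin r)) (enc_qbar cq) \<longleftrightarrow> p2 * nat d1 + g1 * nat d2 \<le> p1 * nat d2 + g2 * nat d1"
    unfolding ge_code_def Fin using q1 q2 d1 d2
    by (simp add: int_encode_pos_div_2 p1_def g1_def p2_def g2_def)
  also have "\<dots> \<longleftrightarrow> int p2 * d1 + int g1 * d2 \<le> int p1 * d2 + int g2 * d1"
  proof -
    have h1: "int (p2 * nat d1 + g1 * nat d2) = int p2 * d1 + int g1 * d2" using d1 d2 by simp
    have h2: "int (p1 * nat d2 + g2 * nat d1) = int p1 * d2 + int g2 * d1" using d1 d2 by simp
    show ?thesis by (metis zle_int h1 h2)
  qed
  also have "\<dots> \<longleftrightarrow> n2 * d1 \<le> n1 * d2" unfolding n1 n2 by (simp add: algebra_simps)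
  also have "\<dots> \<longleftrightarrow> s \<le> r" using rat_less_eq_code[of s r] q1 q2 by (simp add: mult.commute)
  also have "\<dots> \<longleftrightarrow> to_ereal cq \<le> ereal (of_rat r)" using Fin by (simp add: of_rat_less_eq)
  finally show ?thesis .
qed

lemma low_weight_code_iff:
  assumes cq: "cq \<noteq> MInf"
  shows "(2 \<le> enc_qbar v \<and> \<not> ge_code (enc_qbar v) (enc_qbar cq)) \<longleftrightarrow> low_weight (to_ereal cq) v"
proof (cases v)
  case (Fin r)
  have e: "(2 \<le> enc_qbar (Fin r) \<and> \<not> ge_code (enc_qbar (Fin r)) (enc_qbar cq))
      \<longleftrightarrow> \<not> (to_ereal cq \<le> ereal (of_rat r))"
    using ge_code_Fin_iff[OF cq, of r] by simp
  then show ?thesis using Fin by (simp add: low_weight_def not_le)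
qed (auto simp: low_weight_def)

lemma high_weight_code_iff:
  assumes cq: "cq \<noteq> MInf"
  shows "(2 \<le> enc_qbar v \<and> ge_code (enc_qbar v) (enc_qbar cq)) \<longleftrightarrow> high_weight (to_ereal cq) v"
proof (cases v)
  case (Fin r)
  have e: "(2 \<le> enc_qbar (Fin r) \<and> ge_code (enc_qbar (Fin r)) (enc_qbar cq)) \<longleftrightarrow> to_ereal cq \<le> ereal (of_rat r)"
    using ge_code_Fin_iff[OF cq, of r] by simp
  then show ?thesis using Fin by (simp add: high_weight_def)
qed (auto simp: high_weight_def)


section \<open>Correctness of the code-level procedure\<close>

definition nat_of_flags :: "seg_flags \<Rightarrow> nat" where
  "nat_of_flags ch = (if final_seen ch then 1 else 0) + (if minf_seen ch then 2 else 0) +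
      (if low_seen ch then 4 else 0) + (if high_seen ch then 8 else 0)"

lemma nat_of_flags_less: "nat_of_flags ch < 16"
  unfolding nat_of_flags_def by simp

lemma flags_of_nat_of_flags: "flags_of_nat (nat_of_flags ch) = ch"
proof (cases ch)
  case (SegFlags a b c d)
  then show ?thesis by (cases a; cases b; cases c; cases d) (simp_all add: nat_of_flags_def flags_of_nat_def)
qed

lemma nat_of_flags_of_nat: "n < 16 \<Longrightarrow> nat_of_flags (flags_of_nat n) = n"
proof -
  assume "n < 16"
  then have "n = 0 \<or> n = 1 \<or> n = 2 \<or> n = 3 \<or> n = 4 \<or> n = 5 \<or> n = 6 \<or> n = 7 \<or> n = 8 \<or> n = 9 \<or> n = 10
      \<or> n = 11 \<or> n = 12 \<or> n = 13 \<or> n = 14 \<or> n = 15" by arith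
  then show ?thesis by (elim disjE) (simp_all add: nat_of_flags_def flags_of_nat_def)
qed

lemma nat_of_flags_eq_iff: "n < 16 \<Longrightarrow> nat_of_flags ch = n \<longleftrightarrow> ch = flags_of_nat n"
  using flags_of_nat_of_flags nat_of_flags_of_nat by metis

lemma flags_code_eq:
  assumes wf: "wf_wba A" and m: "0 < m" and cq: "cq \<noteq> MInf" and ns: "0 < nstates A"
  shows "flags_code m (enc_wba m A) (enc_qbar cq) x l r
      = nat_of_flags (flags_of A (to_ereal cq) (digit m x) (digit (nstates A) r) l)"
proof -
  have w: "weight_code m (enc_wba m A) (digit (nstates A) r k) (digit m x k) (digit (nstates A) r (Suc k))
      = enc_qbar (wt A (digit (nstates A) r k) (digit m x k) (digit (nstates A) r (Suc k)))" for k
    by (rule weight_code_enc_wba) (simp_all add: digit_less[OF ns] digit_less[OF m])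
  have f: "(\<exists>k<l. mem_code (nth_code (enc_wba m A) 3) (digit (nstates A) r (Suc k))) \<longleftrightarrow>
      (\<exists>k. 0 < k \<and> k \<le> l \<and> digit (nstates A) r k \<in> fin A)"
    unfolding mem_code_fin[OF wf] by (rule ex_less_Suc_shift)
  show ?thesis
    unfolding flags_code_def nat_of_flags_def flags_of_def seg_flags.sel nth_code_enc_wba(1) w f
    by (simp add: enc_qbar_0_iff low_weight_code_iff[OF cq] high_weight_code_iff[OF cq])
qed

lemma profile_code_iff:
  assumes wf: "wf_wba A" and m: "0 < m" and cq: "cq \<noteq> MInf" and n: "n < 16"
  shows "profile_code m (enc_wba m A) (enc_qbar cq) x l p q n
      \<longleftrightarrow> profile A (to_ereal cq) (digit m x) l p q (flags_of_nat n)"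
proof (cases "nstates A = 0")
  case True
  then show ?thesis unfolding profile_code_def profile_def nth_code_enc_wba(1) by auto
next
  case False
  then have ns: "0 < nstates A" by simp
  have seg: "flags_code m (enc_wba m A) (enc_qbar cq) x l r = n \<longleftrightarrow>
      flags_of A (to_ereal cq) (digit m x) (digit (nstates A) r) l = flags_of_nat n" for r
    unfolding flags_code_eq[OF wf m cq ns] using nat_of_flags_eq_iff[OF n] .
  show ?thesis
  proof
    assume "profile_code m (enc_wba m A) (enc_qbar cq) x l p q n"
    then obtain r where r: "digit (nstates A) r 0 = p" "digit (nstates A) r l = q"
      "flags_code m (enc_wba m A) (enc_qbar cq) x l r = n"
      unfolding profile_code_def nth_code_enc_wba(1) by blast
    then show "profile A (to_ereal cq) (digit m x) l p q (flags_of_nat n)"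
      unfolding profile_def seg using digit_less[OF ns] by (intro exI[of _ "digit (nstates A) r"]) auto
  next
    assume "profile A (to_ereal cq) (digit m x) l p q (flags_of_nat n)"
    then obtain rf where rf: "\<forall>k\<le>l. rf k < nstates A" "rf 0 = p" "rf l = q"
      "flags_of A (to_ereal cq) (digit m x) rf l = flags_of_nat n" unfolding profile_def by blast
    have "\<forall>k<Suc l. rf k < nstates A" using rf(1) by auto
    from ex_digits[OF ns this] obtain r where r: "r < nstates A ^ Suc l" "\<forall>k<Suc l. digit (nstates A) r
        k = rf k"
      by blast
    have "flags_of A (to_ereal cq) (digit m x) (digit (nstates A) r) l
        = flags_of A (to_ereal cq) (digit m x) rf l"
      using r(2) by (intro flags_of_cong) auto
    then show "profile_code m (enc_wba m A) (enc_qbar cq) x l p q n"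
      unfolding profile_code_def nth_code_enc_wba(1) seg using r rf by (intro exI[of _ r]) auto
  qed
qed


lemma same_profile_code_iff:
  assumes wf: "wf_wba A" and m: "0 < m" and cq: "cq \<noteq> MInf"
  shows "same_profile_code m (enc_wba m A) (enc_qbar cq) x lx y ly
      \<longleftrightarrow> profile A (to_ereal cq) (digit m x) lx = profile A (to_ereal cq) (digit m y) ly"
proof
  assume P: "same_profile_code m (enc_wba m A) (enc_qbar cq) x lx y ly"
  show "profile A (to_ereal cq) (digit m x) lx = profile A (to_ereal cq) (digit m y) ly"
  proof (intro ext)
    fix p q ch
    show "profile A (to_ereal cq) (digit m x) lx p q ch = profile A (to_ereal cq) (digit m y) ly p q ch"
    proof (cases "p < nstates A \<and> q < nstates A")
      case True
      have "profile_code m (enc_wba m A) (enc_qbar cq) x lx p q (nat_of_flags ch)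
          \<longleftrightarrow> profile_code m (enc_wba m A) (enc_qbar cq) y ly p q (nat_of_flags ch)"
        using P True nat_of_flags_less[of ch] unfolding same_profile_code_def nth_code_enc_wba(1) by blast
      then show ?thesis using profile_code_iff[OF wf m cq nat_of_flags_less]
        by (simp add: flags_of_nat_of_flags)
    next
      case False
      then show ?thesis using profile_states_less by blast
    qed
  qed
next
  assume "profile A (to_ereal cq) (digit m x) lx = profile A (to_ereal cq) (digit m y) ly"
  then show "same_profile_code m (enc_wba m A) (enc_qbar cq) x lx y ly"
    unfolding same_profile_code_def using profile_code_iff[OF wf m cq] by simp
qed

lemma idempotent_code_iff:
  assumes wf: "wf_wba A" and m: "0 < m" and cq: "cq \<noteq> MInf" and u: "u < m ^ lu" and v: "v < m ^ lv"
  shows "idempotent_code m (enc_wba m A) (enc_qbar cq) u lu v lv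
      \<longleftrightarrow> idempotent_pair A (to_ereal cq) (digit m u) lu (digit m v) lv"
  unfolding idempotent_code_def idempotent_pair_def same_profile_code_iff[OF wf m cq]
    digit_concat_word[OF m u] digit_concat_word[OF m v] ..

lemma lasso_accepts_code_iff:
  assumes wf: "wf_wba A" and m: "0 < m" and cq: "cq \<noteq> MInf"
  shows "lasso_accepts_code K m (enc_wba m A) (enc_qbar cq) u lu v lv \<longleftrightarrow>
    lasso_accepts K A (profile A (to_ereal cq) (digit m u) lu) (profile A (to_ereal cq) (digit m v) lv)"
proof
  assume "lasso_accepts_code K m (enc_wba m A) (enc_qbar cq) u lu v lv"
  then obtain p q na nb where "mem_code (nth_code (enc_wba m A) 2) p" "na < 16" "nb < 16"
    "profile_code m (enc_wba m A) (enc_qbar cq) u lu p q na" "profile_code m (enc_wba m A) (enc_qbar cq)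
        v lv q q nb"
    "lasso_flags_code K na nb"
    unfolding lasso_accepts_code_def by blast
  moreover from this have "profile A (to_ereal cq) (digit m u) lu p q (flags_of_nat na)"
    "profile A (to_ereal cq) (digit m v) lv q q (flags_of_nat nb)"
    using profile_code_iff[OF wf m cq] by simp_all
  ultimately show "lasso_accepts K A (profile A (to_ereal cq) (digit m u) lu)
      (profile A (to_ereal cq) (digit m v) lv)"
    unfolding lasso_accepts_def lasso_flags_code_def mem_code_init[OF wf] by blast
next
  assume "lasso_accepts K A (profile A (to_ereal cq) (digit m u) lu) (profile A (to_ereal cq) (digit m v) lv)"
  then obtain p q a b where p: "p \<in> init A" and a: "profile A (to_ereal cq) (digit m u) lu p q a"
    and b: "profile A (to_ereal cq) (digit m v) lv q q b"
    and flags: "final_seen b" "\<not> minf_seen a" "\<not> minf_seen b" "flags_meet_threshold K a b"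
    unfolding lasso_accepts_def by blast
  have "p < nstates A" "q < nstates A" using p wf profile_states_less[OF b] unfolding wf_wba_def by auto
  moreover have "profile_code m (enc_wba m A) (enc_qbar cq) u lu p q (nat_of_flags a)"
    "profile_code m (enc_wba m A) (enc_qbar cq) v lv q q (nat_of_flags b)"
    using a b by (simp_all add: profile_code_iff[OF wf m cq nat_of_flags_less] flags_of_nat_of_flags)
  moreover have "lasso_flags_code K (nat_of_flags a) (nat_of_flags b)"
    using flags by (simp add: lasso_flags_code_def flags_of_nat_of_flags)
  ultimately show "lasso_accepts_code K m (enc_wba m A) (enc_qbar cq) u lu v lv"
    unfolding lasso_accepts_code_def nth_code_enc_wba(1) mem_code_init[OF wf] using p nat_of_flags_less
      by blast
qed

lemma ball_digit_codes_iff: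
  assumes m: "0 < m" and cong: "\<And>x y. \<forall>k<l. x k = y k \<Longrightarrow> P x \<longleftrightarrow> P y"
  shows "(\<forall>u<m ^ l. P (digit m u)) \<longleftrightarrow> (\<forall>x. (\<forall>k<l. x k < m) \<longrightarrow> P x)"
proof
  assume P: "\<forall>u<m ^ l. P (digit m u)"
  show "\<forall>x. (\<forall>k<l. x k < m) \<longrightarrow> P x"
  proof (intro allI impI)
    fix x assume "\<forall>k<l. x k < m"
    then obtain u where "u < m ^ l" "\<forall>k<l. digit m u k = x k" using ex_digits[OF m] by blast
    then show "P x" using P cong by blast
  qed
qed (use digit_less[OF m] in blast)

lemma lasso_inclusion_code_iff:
  assumes m: "0 < m" and wf: "wf_wba N" "wf_wba N'" and cq: "cq \<noteq> MInf"
  shows "(\<forall>lu<B + 1. \<forall>u<m ^ lu. \<forall>lv<B + 1. \<forall>v<m ^ lv. 1 \<le> lu \<longrightarrow> 1 \<le> lv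
       \<longrightarrow> idempotent_code m (enc_wba m N) (enc_qbar cq) u lu v lv
           \<longrightarrow> idempotent_code m (enc_wba m N') (enc_qbar cq) u lu v lv
       \<longrightarrow> lasso_accepts_code K m (enc_wba m N) (enc_qbar cq) u lu v lv
           \<longrightarrow> lasso_accepts_code K m (enc_wba m N') (enc_qbar cq) u lu v lv)
    \<longleftrightarrow> (\<forall>u lu v lv. 1 \<le> lu \<longrightarrow> lu \<le> B \<longrightarrow> 1 \<le> lv \<longrightarrow> lv \<le> B \<longrightarrow> (\<forall>k<lu. u k < m)
       \<longrightarrow> (\<forall>k<lv. v k < m) \<longrightarrow> lasso_inclusion K N N' (to_ereal cq) u lu v lv)"
  (is "?L \<longleftrightarrow> ?R")
proof -
  let ?I = "lasso_inclusion K N N' (to_ereal cq)"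
  have inner: "(\<forall>v<m ^ lv. ?I x lu (digit m v) lv) \<longleftrightarrow> (\<forall>v. (\<forall>k<lv. v k < m) \<longrightarrow> ?I x lu v lv)" for x lu lv
    by (rule ball_digit_codes_iff[OF m, where P = "\<lambda>v. ?I x lu v lv"]) (simp add: lasso_inclusion_cong)
  have outer: "(\<forall>u<m ^ lu. \<forall>v. (\<forall>k<lv. v k < m) \<longrightarrow> ?I (digit m u) lu v lv)
      \<longleftrightarrow> (\<forall>u. (\<forall>k<lu. u k < m) \<longrightarrow> (\<forall>v. (\<forall>k<lv. v k < m) \<longrightarrow> ?I u lu v lv))" for lu lv
  proof (rule ball_digit_codes_iff[OF m, where P = "\<lambda>u. \<forall>v. (\<forall>k<lv. v k < m) \<longrightarrow> ?I u lu v lv"])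
    fix x y :: "nat \<Rightarrow> nat" assume "\<forall>k<lu. x k = y k"
    then have "?I x lu v lv = ?I y lu v lv" for v by (rule lasso_inclusion_cong) simp
    then show "(\<forall>v. (\<forall>k<lv. v k < m) \<longrightarrow> ?I x lu v lv) \<longleftrightarrow> (\<forall>v. (\<forall>k<lv. v k < m) \<longrightarrow> ?I y lu v lv)"
      by simp
  qed
  have digits: "(\<forall>u<m ^ lu. \<forall>v<m ^ lv. ?I (digit m u) lu (digit m v) lv)
      \<longleftrightarrow> (\<forall>u. (\<forall>k<lu. u k < m) \<longrightarrow> (\<forall>v. (\<forall>k<lv. v k < m) \<longrightarrow> ?I u lu v lv))" for lu lv
    unfolding inner outer ..
  have code: "(idempotent_code m (enc_wba m N) (enc_qbar cq) u lu v lv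
      \<longrightarrow> idempotent_code m (enc_wba m N') (enc_qbar cq) u lu v lv
       \<longrightarrow> lasso_accepts_code K m (enc_wba m N) (enc_qbar cq) u lu v lv
           \<longrightarrow> lasso_accepts_code K m (enc_wba m N') (enc_qbar cq) u lu v lv)
     \<longleftrightarrow> ?I (digit m u) lu (digit m v) lv" if "u < m ^ lu" "v < m ^ lv" for u lu v lv
    unfolding lasso_inclusion_def idempotent_code_iff[OF wf(1) m cq that] idempotent_code_iff[OF wf(2) m
      cq that]
      lasso_accepts_code_iff[OF wf(1) m cq] lasso_accepts_code_iff[OF wf(2) m cq] ..
  have "?L \<longleftrightarrow> (\<forall>lu<B + 1. \<forall>lv<B + 1. 1 \<le> lu \<longrightarrow> 1 \<le> lv \<longrightarrow>
      (\<forall>u<m ^ lu. \<forall>v<m ^ lv. ?I (digit m u) lu (digit m v) lv))"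
    using code by auto
  also have "\<dots> \<longleftrightarrow> ?R" unfolding digits by (auto simp: less_Suc_eq_le)
  finally show ?thesis .
qed

lemma inclusion_test_empty_alphabet: "inclusion_test K 0 x"
  unfolding inclusion_test_def Let_def by (simp add: power_0_left)

lemma decode_enc_pair: "fst_decode (enc_pair m N N') = enc_wba m N" "snd_decode (enc_pair m N N')
    = enc_wba m N'"
  unfolding enc_pair_def by simp_all

lemma threshold_code_ball_iff:
  "(\<forall>idx<nstates N * m * nstates N + 1. threshold_code m (enc_wba m N) idx \<noteq> 0
      \<longrightarrow> Q (threshold_code m (enc_wba m N) idx))
     \<longleftrightarrow> (\<forall>cq\<in>insert PInf (weights N m). cq \<noteq> MInf \<longrightarrow> Q (enc_qbar cq))"
proof -
  let ?P = "\<lambda>y. y \<noteq> 0 \<longrightarrow> Q y" and ?ws = "weight_list m N"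
  have "threshold_code m (enc_wba m N) idx = (if idx < length ?ws then ?ws ! idx else 1)" for idx
    unfolding threshold_code_def nth_code_enc_wba by (simp add: nth_code_list_encode length_weight_list)
  then have "(\<forall>idx<nstates N * m * nstates N + 1. ?P (threshold_code m (enc_wba m N) idx))
      \<longleftrightarrow> (\<forall>y\<in>set ?ws. ?P y) \<and> ?P 1"
    unfolding length_weight_list[symmetric] by (auto simp: less_Suc_eq all_set_conv_all_nth)
  also have "set ?ws = enc_qbar ` weights N m"
    by (rule set_eqI) (auto simp: set_weight_list weights_def)
  finally show ?thesis using enc_qbar_0_iff by auto
qed

theorem inclusion_test_correct:
  assumes wf: "wf_wba N" "wf_wba N'"
  shows "inclusion_test K m (enc_pair m N N') \<longleftrightarrow> (\<forall>w. (\<forall>i. w i < m) \<longrightarrow> behavior K N w \<le> behavior K N' w)"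
proof (cases "m = 0")
  case True
  then show ?thesis using inclusion_test_empty_alphabet by simp
next
  case False
  then have m: "0 < m" by simp
  define B where "B = length_bound (nstates N) (nstates N')"
  have "inclusion_test K m (enc_pair m N N') \<longleftrightarrow> (\<forall>cq\<in>insert PInf (weights N m). cq \<noteq> MInf \<longrightarrow>
     (\<forall>lu<B + 1. \<forall>u<m ^ lu. \<forall>lv<B + 1. \<forall>v<m ^ lv. 1 \<le> lu \<longrightarrow> 1 \<le> lv
       \<longrightarrow> idempotent_code m (enc_wba m N) (enc_qbar cq) u lu v lv
           \<longrightarrow> idempotent_code m (enc_wba m N') (enc_qbar cq) u lu v lv
       \<longrightarrow> lasso_accepts_code K m (enc_wba m N) (enc_qbar cq) u lu v lv
           \<longrightarrow> lasso_accepts_code K m (enc_wba m N') (enc_qbar cq) u lu v lv))"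
    unfolding inclusion_test_def decode_enc_pair nth_code_enc_wba(1) B_def Let_def by (rule threshold_code_ball_iff)
  also have "\<dots> \<longleftrightarrow> (\<forall>cq\<in>insert PInf (weights N m). cq \<noteq> MInf \<longrightarrow>
      (\<forall>u lu v lv. 1 \<le> lu \<longrightarrow> lu \<le> B \<longrightarrow> 1 \<le> lv \<longrightarrow> lv \<le> B \<longrightarrow> (\<forall>k<lu. u k < m)
       \<longrightarrow> (\<forall>k<lv. v k < m) \<longrightarrow> lasso_inclusion K N N' (to_ereal cq) u lu v lv))"
    using lasso_inclusion_code_iff[OF m wf] by simp
  also have "\<dots> \<longleftrightarrow> (\<forall>cq\<in>insert PInf (weights N m). cq \<noteq> MInf \<longrightarrow>
      (\<forall>w. (\<forall>i. w i < m) \<longrightarrow> threshold_accepts K N (to_ereal cq) w \<longrightarrow> threshold_accepts K N' (to_ereal cq) w))"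
    using threshold_inclusion_iff_short_lasso_inclusions[OF wf, of m K] unfolding B_def by simp
  also have "\<dots> \<longleftrightarrow> (\<forall>c\<in>insert \<infinity> (to_ereal ` weights N m). c \<noteq> - \<infinity> \<longrightarrow>
      (\<forall>w. (\<forall>i. w i < m) \<longrightarrow> threshold_accepts K N c w \<longrightarrow> threshold_accepts K N' c w))"
    by auto
  also have "\<dots> \<longleftrightarrow> (\<forall>w. (\<forall>i. w i < m) \<longrightarrow> behavior K N w \<le> behavior K N' w)"
    by (rule behavior_inclusion_iff_thresholds[symmetric])
  finally show ?thesis .
qed

theorem theorem7:
  fixes m :: nat and K :: valuation_kind
  shows "\<exists>f. \<forall>N N'. wf_wba N \<and> wf_wba N' \<longrightarrow>
           eval_recf f [enc_pair m N N']
             (if \<forall>w. (\<forall>i. w i < m) \<longrightarrow> behavior K N w \<le> behavior K N' w then 1 else 0)"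
proof -
  obtain f where f: "\<forall>x. eval_recf f [x] (if inclusion_test K m x then 1 else 0)"
    using decidable_inclusion_test by blast
  show ?thesis
  proof (intro exI allI impI)
    fix N N' assume "wf_wba N \<and> wf_wba N'"
    then have "inclusion_test K m (enc_pair m N N') \<longleftrightarrow> (\<forall>w. (\<forall>i. w i < m) \<longrightarrow> behavior K N w \<le> behavior K N' w)"
      using inclusion_test_correct by blast
    then show "eval_recf f [enc_pair m N N']
             (if \<forall>w. (\<forall>i. w i < m) \<longrightarrow> behavior K N w \<le> behavior K N' w then 1 else 0)"
      using f[rule_format, of "enc_pair m N N'"] by simp
  qed
qed

end
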